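(* Let $\mu_0$ satisfy $\mathfrak m_4:=\int|v|^4\mu_0(dv)<\infty$, $|\hat\mu_0(\xi)|=o(|\xi|^{-p})$ as $|\xi|\to\infty$ for some $p>0$, $\int v\mu_0(dv)=0$, $\int v_iv_j\mu_0(dv)=\sigma_i^2\delta_{ij}$ with $\sigma_1^2+\sigma_2^2+\sigma_3^2=3$. Let $q=1/(2\lceil2/p\rceil)$ and let $\lambda>0$ be such that $|\hat\mu_0(\xi)|\le(\lambda^2/(\lambda^2+|\xi|^2))^q$ for all $\xi$. Define $$\mathrm W:=\sum_{j=1}^\nu\pi_{j,\nu}^4,\quad R:=\tfrac12(\mathfrak m_4\mathrm W)^{-1/4},\quad\Psi(\rho):=\prod_{j=1}^\nu\Big(\frac{\lambda^2}{\lambda^2+\rho^2\pi_{j,\nu}^2}\Big)^q,\quad\hat{\mathcal N}(\rho;u):=\prod_{j=1}^\nu\hat\mu_0\big(\rho\,\pi_{j,\nu}\psi_{j,\nu}(u)\big).$$ Then, outside a $P_t$-null set, for every $\rho\in[0,R]$, $$\sup_{u\in S^2}|\hat{\mathcal N}(\rho;u)|\le\Psi(\rho),\qquad\sup_{u\in S^2}|\hat{\mathcal M}(\rho u)|\le\Psi(\rho).$$ Moreover there are non-random polynomials $\wp_1,\wp_2$ of degrees $2$ and $4$, with positive coefficients depending only on $\mu_0$, such that outside a $P_t$-null set, for every $\rho\in[0,R]$ and $k=1,2$, $$\sup_{u\in S^2}\Big|\frac{\partial^k}{\partial\rho^k}\hat{\mathcal N}(\rho;u)\Big|\le\wp_k(\rho)\Psi(\rho),\qquad\sup_{u\in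 S^2}\Big|\frac{\partial^k}{\partial\rho^k}\hat{\mathcal M}(\rho u)\Big|\le\wp_k(\rho)\Psi(\rho).$$ The bounds for $\hat{\mathcal N}$ hold for any choice of $\mathrm B$.
   Context: $\hat\mu(\xi)=\int e^{i\xi\cdot v}\mu(dv)$. $\mathrm B:S^2\to\mathbb{SO}(3)$ is a measurable map with $\mathrm B(u)e_3=u$, and $\psi_{j,n}(u):=\mathrm B(u)\mathrm O_{j,n}e_3$ with $\mathrm O_{j,n}:=\mathrm O^*_{j,n}(\tau_n,(\phi_1,\dots,\phi_{n-1}),(\vartheta_1,\dots,\vartheta_{n-1}))$. Trees: McKean binary trees (finite rooted trees, each node with zero or two children distinguished left/right, leaves numbered left to right); $\mathbb T(n)$ those with $n$ leaves, $\mathfrak t_1$ the one-node tree, $\mathfrak t_n^l,\mathfrak t_n^r$ subtrees at left/right child of root with $n_l,n_r$ leaves; germination $\mathfrak t_{n,k}$ attaches two leaves to the $k$-th leaf. Kernel $b$ on $[-1,1]$ with $b(x)=b(\sqrt{1-x^2})|x|/\sqrt{1-x^2}=b(-x)$, $\int_0^1b=1$; $\beta(d\varphi)=\frac12b(\cos\varphi)\sin\varphi d\varphi$. Under $P_t$ independent: $\nu$, $P_t[\nu=n]=e^{-t}(1-e^{-t})^{n-1}$; Markov chain $\tau_n\in\mathbb T(n)$, $\tau_1=\mathfrak t_1$, $P_t[\tau_{n+1}=\mathfrak t_{n,k}|\tau_n=\mathfrak t_n]=1/n$; i.i.d. $\phi_n\sim\beta$; i.i.d. $\vartheta_n$ uniform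 on $(0,2\pi)$. $\pi^*_{1,1}\equiv1$, $\pi^*_{j,n}(\mathfrak t_n,\boldsymbol\varphi)=\pi^*_{j,n_l}(\mathfrak t_n^l,\boldsymbol\varphi^l)\cos\varphi_{n-1}$ ($j\le n_l$), $=\pi^*_{j-n_l,n_r}(\mathfrak t_n^r,\boldsymbol\varphi^r)\sin\varphi_{n-1}$ ($j>n_l$), where $\boldsymbol\varphi^l=(\varphi_1,\dots,\varphi_{n_l-1})$, $\boldsymbol\varphi^r=(\varphi_{n_l},\dots,\varphi_{n-2})$; $\pi_{j,n}=\pi^*_{j,n}(\tau_n,(\phi_1,\dots,\phi_{n-1}))$. $\mathrm O^*_{1,1}=\mathrm{Id}$, $\mathrm O^*_{j,n}=\mathrm M^l(\varphi_{n-1},\theta_{n-1})\mathrm O^*_{j,n_l}(\mathfrak t_n^l,\boldsymbol\varphi^l,\boldsymbol\theta^l)$ ($j\le n_l$), $=\mathrm M^r(\varphi_{n-1},\theta_{n-1})\mathrm O^*_{j-n_l,n_r}(\mathfrak t_n^r,\boldsymbol\varphi^r,\boldsymbol\theta^r)$ ($j>n_l$), with $\mathrm M^l(\varphi,\theta)=\begin{pmatrix}-\cos\theta\cos\varphi&\sin\theta&\cos\theta\sin\varphi\\-\sin\theta\cos\varphi&-\cos\theta&\sin\theta\sin\varphi\\ \sin\varphi&0&\cos\varphi\end{pmatrix}$, $\mathrm M^r(\varphi,\theta)=\begin{pmatrix}\sin\theta&\cos\theta\sin\varphi&-\cos\theta\cos\varphi\\-\cos\theta&\sin\theta\sin\varphi&-\sin\theta\cos\varphi\\0&\cos\varphi&\sin\varphi\end{pmatrix}$.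 $\hat{\mathcal M}(\xi)$, for $\xi\neq0$, $\rho=|\xi|$, $u=\xi/|\xi|$, is the conditional expectation of $\hat{\mathcal N}(\rho;u)$ given $\nu,(\tau_n),(\phi_n)$, i.e. $\hat\mu_0(\xi)$ if $\nu=1$ and $\int_{(0,2\pi)^{\nu-1}}\prod_{j}\hat\mu_0(\rho\pi_{j,\nu}\mathrm B(u)\mathrm O^*_{j,\nu}(\tau_\nu,\boldsymbol\phi,\boldsymbol\theta)e_3)u_{(0,2\pi)}^{\otimes(\nu-1)}(d\boldsymbol\theta)$ if $\nu\ge2$; it does not depend on $\mathrm B$. *)

theory Defs
  imports "HOL-Probability.Probability" "HOL-Computational_Algebra.Polynomial"
    "HOL-Library.Landau_Symbols"
begin

definition char3 :: "(real^3) measure \<Rightarrow> real^3 \<Rightarrow> complex" where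
  "char3 \<mu> \<xi> = integral\<^sup>L \<mu> (\<lambda>v. cis (\<xi> \<bullet> v))"

definition e3 :: "real^3" where "e3 = axis 3 1"

datatype mtree = Leaf | Node mtree mtree

fun leaves :: "mtree \<Rightarrow> nat" where
  "leaves Leaf = 1"
| "leaves (Node l r) = leaves l + leaves r"

text \<open>Germination: attach two leaves to the k-th leaf (leaves numbered from 1, left to right).\<close>
fun germ :: "mtree \<Rightarrow> nat \<Rightarrow> mtree" where
  "germ Leaf k = (if k = 1 then Node Leaf Leaf else Leaf)"
| "germ (Node l r) k =
     (if k \<le> leaves l then Node (germ l k) r else Node l (germ r (k - leaves l)))"

text \<open>Angle vectors (phi_1,...,phi_{n-1}) are functions nat => real indexed from 1.\<close>
fun pi_star :: "mtree \<Rightarrow> (nat \<Rightarrow> real) \<Rightarrow> nat \<Rightarrow> real" where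
  "pi_star Leaf \<phi> j = 1"
| "pi_star (Node l r) \<phi> j =
     (let nl = leaves l; n = leaves l + leaves r in
      if j \<le> nl then pi_star l \<phi> j * cos (\<phi> (n - 1))
      else pi_star r (\<lambda>i. \<phi> (i + nl - 1)) (j - nl) * sin (\<phi> (n - 1)))"

definition Ml :: "real \<Rightarrow> real \<Rightarrow> real^3^3" where
  "Ml \<phi> \<theta> = vector [vector [- cos \<theta> * cos \<phi>, sin \<theta>, cos \<theta> * sin \<phi>],
                     vector [- sin \<theta> * cos \<phi>, - cos \<theta>, sin \<theta> * sin \<phi>],
                     vector [sin \<phi>, 0, cos \<phi>]]"

definition Mr :: "real \<Rightarrow> real \<Rightarrow> real^3^3" where
  "Mr \<phi> \<theta> = vector [vector [sin \<theta>, cos \<theta> * sin \<phi>, - cos \<theta> * cos \<phi>],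
                     vector [- cos \<theta>, sin \<theta> * sin \<phi>, - sin \<theta> * cos \<phi>],
                     vector [0, cos \<phi>, sin \<phi>]]"

fun O_star :: "mtree \<Rightarrow> (nat \<Rightarrow> real) \<Rightarrow> (nat \<Rightarrow> real) \<Rightarrow> nat \<Rightarrow> real^3^3" where
  "O_star Leaf \<phi> \<theta> j = mat 1"
| "O_star (Node l r) \<phi> \<theta> j =
     (let nl = leaves l; n = leaves l + leaves r in
      if j \<le> nl then Ml (\<phi> (n - 1)) (\<theta> (n - 1)) ** O_star l \<phi> \<theta> j
      else Mr (\<phi> (n - 1)) (\<theta> (n - 1)) **
             O_star r (\<lambda>i. \<phi> (i + nl - 1)) (\<lambda>i. \<theta> (i + nl - 1)) (j - nl))"

text \<open>Sample points: (nu, K, phi, theta). The tree chain is tau_1 = Leaf,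
  tau_{n+1} = germ tau_n K_n with K_n uniform on {1..n}, independent; since germination
  at distinct leaves gives distinct trees, this is exactly the Markov chain with
  P[tau_{n+1} = germ t k | tau_n = t] = 1/n.\<close>

type_synonym sample = "nat \<times> (nat \<Rightarrow> nat) \<times> (nat \<Rightarrow> real) \<times> (nat \<Rightarrow> real)"

fun tau :: "(nat \<Rightarrow> nat) \<Rightarrow> nat \<Rightarrow> mtree" where
  "tau K 0 = Leaf"
| "tau K (Suc n) = (if n = 0 then Leaf else germ (tau K n) (K n))"

definition Kdist :: "nat \<Rightarrow> nat measure" where
  "Kdist n = measure_pmf (pmf_of_set {1..max 1 n})"

definition beta_meas :: "(real \<Rightarrow> real) \<Rightarrow> real measure" where
  "beta_meas b = density lborel
     (\<lambda>\<phi>. ennreal (indicator {0..pi} \<phi> * (b (cos \<phi>) * sin \<phi> / 2)))"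

definition unif_theta :: "real measure" where
  "unif_theta = uniform_measure lborel {0<..<2 * pi}"

text \<open>nu = 1 + Geometric(exp(-t)), i.e. P[nu = n] = e^{-t} (1 - e^{-t})^{n-1}.\<close>
definition Pt :: "(real \<Rightarrow> real) \<Rightarrow> real \<Rightarrow> sample measure" where
  "Pt b t = measure_pmf (map_pmf Suc (geometric_pmf (exp (- t)))) \<Otimes>\<^sub>M
            (PiM UNIV Kdist \<Otimes>\<^sub>M
             (PiM UNIV (\<lambda>_. beta_meas b) \<Otimes>\<^sub>M PiM UNIV (\<lambda>_. unif_theta)))"

definition nu :: "sample \<Rightarrow> nat" where "nu \<omega> = fst \<omega>"
definition Kseq :: "sample \<Rightarrow> nat \<Rightarrow> nat" where "Kseq \<omega> = fst (snd \<omega>)"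
definition phis :: "sample \<Rightarrow> nat \<Rightarrow> real" where "phis \<omega> = fst (snd (snd \<omega>))"
definition thetas :: "sample \<Rightarrow> nat \<Rightarrow> real" where "thetas \<omega> = snd (snd (snd \<omega>))"

definition tree_nu :: "sample \<Rightarrow> mtree" where "tree_nu \<omega> = tau (Kseq \<omega>) (nu \<omega>)"

definition pi_rv :: "sample \<Rightarrow> nat \<Rightarrow> real" where
  "pi_rv \<omega> j = pi_star (tree_nu \<omega>) (phis \<omega>) j"

definition kernel_b :: "(real \<Rightarrow> real) \<Rightarrow> bool" where
  "kernel_b b \<longleftrightarrow> b \<in> borel_measurable borel \<and> (\<forall>x. 0 \<le> b x) \<and>
     (\<forall>x. -1 < x \<and> x < 1 \<longrightarrow>
         b x = b (sqrt (1 - x\<^sup>2)) * \<bar>x\<bar> / sqrt (1 - x\<^sup>2) \<and> b x = b (- x)) \<and>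
     (\<integral>\<^sup>+ x\<in>{0..1}. ennreal (b x) \<partial>lborel) = 1"

definition admissible_B :: "(real^3 \<Rightarrow> real^3^3) \<Rightarrow> bool" where
  "admissible_B B \<longleftrightarrow> B \<in> borel_measurable (restrict_space borel (sphere 0 1)) \<and>
     (\<forall>u\<in>sphere 0 1. orthogonal_matrix (B u) \<and> det (B u) = 1 \<and> B u *v e3 = u)"

definition W_rv :: "sample \<Rightarrow> real" where
  "W_rv \<omega> = (\<Sum>j=1..nu \<omega>. (pi_rv \<omega> j) ^ 4)"

definition moment4 :: "(real^3) measure \<Rightarrow> real" where
  "moment4 \<mu> = integral\<^sup>L \<mu> (\<lambda>v. norm v ^ 4)"

definition R_rv :: "(real^3) measure \<Rightarrow> sample \<Rightarrow> real" where
  "R_rv \<mu> \<omega> = (moment4 \<mu> * W_rv \<omega>) powr (-1/4) / 2"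

definition Psi :: "real \<Rightarrow> real \<Rightarrow> sample \<Rightarrow> real \<Rightarrow> real" where
  "Psi lam q \<omega> \<rho> = (\<Prod>j=1..nu \<omega>. (lam\<^sup>2 / (lam\<^sup>2 + \<rho>\<^sup>2 * (pi_rv \<omega> j)\<^sup>2)) powr q)"

definition psi_rv :: "(real^3 \<Rightarrow> real^3^3) \<Rightarrow> sample \<Rightarrow> nat \<Rightarrow> real^3 \<Rightarrow> real^3" where
  "psi_rv B \<omega> j u = B u *v (O_star (tree_nu \<omega>) (phis \<omega>) (thetas \<omega>) j *v e3)"

definition Nhat :: "(real^3) measure \<Rightarrow> (real^3 \<Rightarrow> real^3^3) \<Rightarrow> sample \<Rightarrow> real \<Rightarrow> real^3 \<Rightarrow> complex" where
  "Nhat \<mu> B \<omega> \<rho> u = (\<Prod>j=1..nu \<omega>. char3 \<mu> ((\<rho> * pi_rv \<omega> j) *\<^sub>R psi_rv B \<omega> j u))"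

text \<open>hat M(rho u): conditional expectation of hat N(rho;u) given nu, tau, phi,
  i.e. the integral over theta_1..theta_{nu-1} i.i.d. uniform on (0,2pi).\<close>
definition Mhat :: "(real^3) measure \<Rightarrow> (real^3 \<Rightarrow> real^3^3) \<Rightarrow> sample \<Rightarrow> real \<Rightarrow> real^3 \<Rightarrow> complex" where
  "Mhat \<mu> B \<omega> \<rho> u =
     (if nu \<omega> = 1 then char3 \<mu> (\<rho> *\<^sub>R u)
      else integral\<^sup>L (PiM {1..nu \<omega> - 1} (\<lambda>_. unif_theta))
        (\<lambda>\<theta>. \<Prod>j=1..nu \<omega>. char3 \<mu> ((\<rho> * pi_rv \<omega> j) *\<^sub>R
                 (B u *v (O_star (tree_nu \<omega>) (phis \<omega>) \<theta> j *v e3)))))"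

definition dr :: "(real \<Rightarrow> complex) \<Rightarrow> real \<Rightarrow> complex" where
  "dr f = (\<lambda>x. vector_derivative f (at x))"

definition bounds_at :: "(real \<Rightarrow> complex) \<Rightarrow> (real \<Rightarrow> real) \<Rightarrow> real poly \<Rightarrow> real poly \<Rightarrow> real \<Rightarrow> bool" where
  "bounds_at f \<Psi> p1 p2 \<rho> \<longleftrightarrow>
     norm (f \<rho>) \<le> \<Psi> \<rho> \<and>
     (f has_vector_derivative dr f \<rho>) (at \<rho>) \<and>
     norm (dr f \<rho>) \<le> poly p1 \<rho> * \<Psi> \<rho> \<and>
     (dr f has_vector_derivative dr (dr f) \<rho>) (at \<rho>) \<and>
     norm (dr (dr f) \<rho>) \<le> poly p2 \<rho> * \<Psi> \<rho>"

end

theory Submission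
  imports Defs
begin

text \<open>
  For a fixed sample point, \<open>\<N>(\<rho>; u) = \<Prod>\<^sub>j \<mu>\<^sub>0(\<rho> a\<^sub>j)\<close> with directions
  \<open>a\<^sub>j = \<pi>\<^sub>j B(u) O\<^sub>j e\<^sub>3\<close> of length \<open>|\<pi>\<^sub>j|\<close>.  Each factor is bounded by its weight
  \<open>g\<^sub>j = (\<lambda>\<^sup>2/(\<lambda>\<^sup>2 + \<rho>\<^sup>2\<pi>\<^sub>j\<^sup>2))\<^sup>q\<close> (hypothesis on \<open>\<mu>\<^sub>0\<close>), and since \<open>\<mu>\<^sub>0\<close> is centred its
  derivatives satisfy \<open>|f\<^sub>j'| \<le> \<rho> \<pi>\<^sub>j\<^sup>2 m\<^sub>2\<close>, \<open>|f\<^sub>j''| \<le> \<pi>\<^sub>j\<^sup>2 m\<^sub>2\<close>.  On \<open>[0, R]\<close> we have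
  \<open>\<rho> |\<pi>\<^sub>j| \<le> c := m\<^sub>4\<^sup>-\<^sup>1\<^sup>/\<^sup>4/2\<close>, so \<open>g\<^sub>j\<close> is bounded below by a constant and the derivative
  bounds become relative: \<open>|f\<^sub>j'| \<le> \<rho> \<pi>\<^sub>j\<^sup>2 K g\<^sub>j\<close>, \<open>|f\<^sub>j''| \<le> \<pi>\<^sub>j\<^sup>2 K g\<^sub>j\<close>.  The Leibniz rule
  and \<open>\<Sum>\<^sub>j \<pi>\<^sub>j\<^sup>2 = 1\<close> then give the bounds \<open>\<rho>K \<Psi>\<close> and \<open>(K + \<rho>\<^sup>2K\<^sup>2) \<Psi>\<close>, dominated by the
  polynomials \<open>\<wp>\<^sub>1, \<wp>\<^sub>2\<close>.  \<open>\<M>\<close> is the average of such products over the angles \<open>\<theta>\<close>; the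
  bounds are uniform in \<open>\<theta>\<close> and survive differentiation under the integral.
\<close>

section \<open>The probability space\<close>

lemma nn_integral_reflect:
  fixes f :: "real \<Rightarrow> ennreal"
  assumes [measurable]: "f \<in> borel_measurable borel"
  shows "(\<integral>\<^sup>+ x. f (- x) \<partial>lborel) = (\<integral>\<^sup>+ x. f x \<partial>lborel)"
proof -
  have "(\<integral>\<^sup>+ x. f x \<partial>lborel) = (\<integral>\<^sup>+ x. f x \<partial>distr lborel borel uminus)"
    by (simp add: lborel_distr_uminus)
  also have "\<dots> = (\<integral>\<^sup>+ x. f (- x) \<partial>lborel)"
    by (subst nn_integral_distr) auto
  finally show ?thesis ..
qed

lemma ennreal_half: "0 \<le> y \<Longrightarrow> ennreal (y / 2) = ennreal y / 2"
  by (metis divide_ennreal ennreal_numeral zero_less_numeral)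

text \<open>The angle law \<open>\<beta>(d\<phi>) = b(cos \<phi>) sin \<phi> d\<phi> / 2\<close> is a probability measure: the substitution
  \<open>x = - cos \<phi>\<close> turns its mass into \<open>\<integral>\<^sub>-\<^sub>1\<^sup>1 b(x)/2 dx\<close>, which equals \<open>\<integral>\<^sub>0\<^sup>1 b = 1\<close> by the
  symmetry of \<open>b\<close>.\<close>
lemma prob_space_beta_meas:
  assumes "kernel_b b"
  shows "prob_space (beta_meas b)"
proof
  have [measurable]: "b \<in> borel_measurable borel" and b_nonneg: "\<And>x. 0 \<le> b x"
    and b_even: "\<And>x. -1 < x \<Longrightarrow> x < 1 \<Longrightarrow> b x = b (- x)"
    and b_mass: "(\<integral>\<^sup>+ x\<in>{0..1}. ennreal (b x) \<partial>lborel) = 1"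
    using assms unfolding kernel_b_def by auto
  define half where "half = (\<integral>\<^sup>+ x. ennreal (b x * indicator {0..1} x) \<partial>lborel)"
  have half_1: "half = 1"
    using b_mass unfolding half_def
    by (metis (no_types, lifting) nn_integral_cong indicator_mult_ennreal mult.commute)
  have "emeasure (beta_meas b) (space (beta_meas b)) =
      (\<integral>\<^sup>+ \<phi>. ennreal ((\<lambda>x. b (- x) / 2) (- cos \<phi>) * sin \<phi> * indicator {0..pi} \<phi>) \<partial>lborel)"
    unfolding beta_meas_def
    by (subst emeasure_density) (auto intro!: nn_integral_cong simp: field_simps)
  also have "\<dots> = (\<integral>\<^sup>+ x. ennreal (b (- x) / 2 * indicator {- cos 0..- cos pi} x) \<partial>lborel)"
    by (rule nn_integral_substitution[where g="\<lambda>\<phi>. - cos \<phi>", symmetric])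
       (auto intro!: derivative_eq_intros continuous_intros sin_ge_zero simp: set_borel_measurable_def)
  also have "\<dots> = (\<integral>\<^sup>+ x. ennreal (b x * indicator {0..1} x) / 2
                        + ennreal (b (- x) * indicator {0..1} (- x)) / 2 \<partial>lborel)"
  proof (rule nn_integral_cong_AE)
    have "AE x in lborel. x \<noteq> 1 \<and> x \<noteq> -1 \<and> x \<noteq> 0"
      using AE_lborel_singleton[of 1] AE_lborel_singleton[of "-1"] AE_lborel_singleton[of 0]
      by eventually_elim auto
    then show "AE x in lborel. ennreal (b (- x) / 2 * indicator {- cos 0..- cos pi} x) =
        ennreal (b x * indicator {0..1} x) / 2 + ennreal (b (- x) * indicator {0..1} (- x)) / 2"
    proof eventually_elim
      case (elim x)
      then consider "0 < x \<and> x < 1" | "-1 < x \<and> x < 0" | "x < -1" | "1 < x"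
        by linarith
      then show ?case
        by cases (use b_even[of x] b_nonneg[of x] b_nonneg[of "- x"]
                  in \<open>auto simp: indicator_def ennreal_half\<close>)
    qed
  qed
  also have "\<dots> = half / 2 + (\<integral>\<^sup>+ x. ennreal (b (- x) * indicator {0..1} (- x)) \<partial>lborel) / 2"
    unfolding half_def by (subst nn_integral_add) (auto simp: nn_integral_divide)
  also have "(\<integral>\<^sup>+ x. ennreal (b (- x) * indicator {0..1} (- x)) \<partial>lborel) = half"
    unfolding half_def by (rule nn_integral_reflect) auto
  also have "half / 2 + half / 2 = 1"
    using ennreal_plus[of "1/2" "1/2"] ennreal_half[of 1] by (simp add: half_1)
  finally show "emeasure (beta_meas b) (space (beta_meas b)) = 1" .
qed

lemma prob_space_unif_theta: "prob_space unif_theta"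
  unfolding unif_theta_def by (rule prob_space_uniform_measure) auto

text \<open>The germination sites are admissible: the \<open>n\<close>-th step germinates one of the
  \<open>n\<close> existing leaves.  This holds almost surely, and it is all we need to know
  about the tree chain.\<close>
definition valid_sites :: "(nat \<Rightarrow> nat) \<Rightarrow> bool" where
  "valid_sites K \<longleftrightarrow> (\<forall>m. 1 \<le> m \<longrightarrow> K m \<in> {1..m})"

lemma sets_valid_sites: "{K \<in> space (PiM UNIV Kdist). valid_sites K} \<in> sets (PiM UNIV Kdist)"
  unfolding valid_sites_def
proof (rule sets.sets_Collect_countable_All)
  fix m
  have "(\<lambda>K. K m) \<in> measurable (PiM UNIV Kdist) (Kdist m)"
    by (rule measurable_component_singleton) simp
  then have "(\<lambda>K. K m) -` {1..m} \<inter> space (PiM UNIV Kdist) \<in> sets (PiM UNIV Kdist)"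
    by (rule measurable_sets) (simp add: Kdist_def)
  then show "{K \<in> space (PiM UNIV Kdist). 1 \<le> m \<longrightarrow> K m \<in> {1..m}} \<in> sets (PiM UNIV Kdist)"
    by (cases "1 \<le> m") (auto simp: vimage_def Int_def conj_commute)
qed

lemma AE_valid_sites: "AE K in PiM UNIV Kdist. valid_sites K"
proof -
  interpret product_prob_space Kdist UNIV
    by (rule product_prob_spaceI) (simp add: Kdist_def prob_space_measure_pmf)
  have "AE K in PiM UNIV Kdist. K m \<in> {1..m}" if "1 \<le> m" for m
  proof -
    have "AE x in Kdist m. x \<in> {1..m}"
      unfolding Kdist_def using that by (subst AE_measure_pmf_iff) (auto simp: max_def)
    then have "AE x in distr (PiM UNIV Kdist) (Kdist m) (\<lambda>K. K m). x \<in> {1..m}"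
      by (subst PiM_component) auto
    from AE_distrD[OF _ this] show ?thesis by simp
  qed
  then show ?thesis
    unfolding valid_sites_def by (subst AE_all_countable) (auto intro: AE_impI)
qed

lemma sets_pair_Collect_fst:
  assumes "{x \<in> space M1. P x} \<in> sets M1"
  shows "{z \<in> space (M1 \<Otimes>\<^sub>M M2). P (fst z)} \<in> sets (M1 \<Otimes>\<^sub>M M2)"
proof -
  have "{z \<in> space (M1 \<Otimes>\<^sub>M M2). P (fst z)} = fst -` {x \<in> space M1. P x} \<inter> space (M1 \<Otimes>\<^sub>M M2)"
    by (auto simp: space_pair_measure)
  also have "\<dots> \<in> sets (M1 \<Otimes>\<^sub>M M2)"
    by (rule measurable_sets[OF measurable_fst assms])
  finally show ?thesis .
qed

lemma sets_pair_Collect_snd: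
  assumes "{y \<in> space M2. P y} \<in> sets M2"
  shows "{z \<in> space (M1 \<Otimes>\<^sub>M M2). P (snd z)} \<in> sets (M1 \<Otimes>\<^sub>M M2)"
proof -
  have "{z \<in> space (M1 \<Otimes>\<^sub>M M2). P (snd z)} = snd -` {y \<in> space M2. P y} \<inter> space (M1 \<Otimes>\<^sub>M M2)"
    by (auto simp: space_pair_measure)
  also have "\<dots> \<in> sets (M1 \<Otimes>\<^sub>M M2)"
    by (rule measurable_sets[OF measurable_snd assms])
  finally show ?thesis .
qed

lemma AE_pair_fstI:
  assumes "pair_sigma_finite M1 M2" and "{x \<in> space M1. P x} \<in> sets M1"
    and "AE x in M1. P x"
  shows "AE z in M1 \<Otimes>\<^sub>M M2. P (fst z)"
  by (rule pair_sigma_finite.AE_pair_measure[OF assms(1) sets_pair_Collect_fst[OF assms(2)]])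
     (use assms(3) in \<open>auto elim!: AE_mp\<close>)

lemma AE_pair_sndI:
  assumes "pair_sigma_finite M1 M2" and "{y \<in> space M2. P y} \<in> sets M2"
    and "AE y in M2. P y"
  shows "AE z in M1 \<Otimes>\<^sub>M M2. P (snd z)"
  by (rule pair_sigma_finite.AE_pair_measure[OF assms(1) sets_pair_Collect_snd[OF assms(2)]])
     (use assms(3) in simp)

text \<open>Lifting the
  statement from the factor \<open>\<Pi> Kdist\<close> needs the other factors to be \<open>\<sigma>\<close>-finite, which is
  where the angle law being a probability measure is used.\<close>
lemma AE_valid_sites_Pt:
  assumes "kernel_b b"
  shows "AE \<omega> in Pt b t. valid_sites (Kseq \<omega>)"
proof -
  let ?N = "measure_pmf (map_pmf Suc (geometric_pmf (exp (- t))))"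
  let ?K = "PiM UNIV Kdist"
  let ?A = "PiM UNIV (\<lambda>_. beta_meas b) \<Otimes>\<^sub>M PiM UNIV (\<lambda>_. unif_theta)"
  have prob_A: "prob_space ?A"
    by (intro prob_space_pair prob_space_PiM prob_space_beta_meas[OF assms] prob_space_unif_theta)
  have prob_K: "prob_space ?K"
    by (intro prob_space_PiM) (simp add: Kdist_def prob_space_measure_pmf)
  have KA: "pair_sigma_finite ?K ?A"
    unfolding pair_sigma_finite_def using prob_K prob_A by (blast intro: prob_space_imp_sigma_finite)
  have NKA: "pair_sigma_finite ?N (?K \<Otimes>\<^sub>M ?A)"
    unfolding pair_sigma_finite_def using prob_space_pair[OF prob_K prob_A] prob_space_measure_pmf
    by (blast intro: prob_space_imp_sigma_finite)
  have "AE z in ?N \<Otimes>\<^sub>M (?K \<Otimes>\<^sub>M ?A). valid_sites (fst (snd z))"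
    by (intro AE_pair_sndI[OF NKA] AE_pair_fstI[OF KA] sets_pair_Collect_fst
              sets_valid_sites AE_valid_sites)
  then show ?thesis unfolding Pt_def Kseq_def .
qed

section \<open>Trees and the weights \<open>\<pi>\<close>\<close>

lemma leaves_pos: "1 \<le> leaves t"
  by (induction t) auto

lemma leaves_germ: "1 \<le> k \<Longrightarrow> k \<le> leaves t \<Longrightarrow> leaves (germ t k) = leaves t + 1"
  by (induction t arbitrary: k) auto

lemma leaves_tau:
  assumes "valid_sites K" and "1 \<le> n"
  shows "leaves (tau K n) = n"
  using assms(2)
proof (induction n)
  case (Suc n)
  show ?case
  proof (cases "n = 0")
    case False
    then have "leaves (tau K n) = n" and "K n \<in> {1..n}"
      using Suc assms(1) by (auto simp: valid_sites_def)
    then show ?thesis using False by (simp add: leaves_germ)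
  qed simp
qed simp

text \<open>The weights of a tree form a unit vector: \<open>\<Sum>\<^sub>j \<pi>\<^sub>j\<^sup>2 = 1\<close>, because each
  node splits the squared weight of its parent as \<open>cos\<^sup>2 + sin\<^sup>2\<close>.\<close>
lemma sum_pi_star_sq: "(\<Sum>j=1..leaves t. (pi_star t \<phi> j)\<^sup>2) = 1"
proof (induction t arbitrary: \<phi>)
  case (Node l r)
  define nl nr where "nl = leaves l" and "nr = leaves r"
  define c where "c = \<phi> (nl + nr - 1)"
  have left: "(\<Sum>j=1..nl. (pi_star (Node l r) \<phi> j)\<^sup>2) = (cos c)\<^sup>2"
  proof -
    have "(\<Sum>j=1..nl. (pi_star (Node l r) \<phi> j)\<^sup>2) = (\<Sum>j=1..nl. (pi_star l \<phi> j)\<^sup>2) * (cos c)\<^sup>2"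
      unfolding sum_distrib_right
      by (rule sum.cong) (auto simp: nl_def nr_def c_def Let_def power_mult_distrib)
    then show ?thesis using Node.IH(1)[of \<phi>] by (simp add: nl_def)
  qed
  have right: "(\<Sum>j=nl+1..nl+nr. (pi_star (Node l r) \<phi> j)\<^sup>2) = (sin c)\<^sup>2"
  proof -
    have "(\<Sum>j=nl+1..nl+nr. (pi_star (Node l r) \<phi> j)\<^sup>2) = (\<Sum>i=1..nr. (pi_star (Node l r) \<phi> (i + nl))\<^sup>2)"
      by (rule sum.reindex_bij_witness[where j="\<lambda>j. j - nl" and i="\<lambda>i. i + nl"]) auto
    also have "\<dots> = (\<Sum>i=1..nr. (pi_star r (\<lambda>i. \<phi> (i + nl - 1)) i)\<^sup>2) * (sin c)\<^sup>2"
      unfolding sum_distrib_right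
      by (rule sum.cong) (auto simp: nl_def nr_def c_def Let_def power_mult_distrib)
    finally show ?thesis using Node.IH(2)[of "\<lambda>i. \<phi> (i + nl - 1)"] by (simp add: nr_def)
  qed
  have "{1..leaves (Node l r)} = {1..nl} \<union> {nl+1..nl+nr}"
    using leaves_pos[of l] by (auto simp: nl_def nr_def)
  then have "(\<Sum>j=1..leaves (Node l r). (pi_star (Node l r) \<phi> j)\<^sup>2) =
      (\<Sum>j=1..nl. (pi_star (Node l r) \<phi> j)\<^sup>2) + (\<Sum>j=nl+1..nl+nr. (pi_star (Node l r) \<phi> j)\<^sup>2)"
    by (simp add: sum.union_disjoint)
  then show ?case using left right by simp
qed simp

lemma sum_pi_rv_sq_le_1:
  assumes "valid_sites (Kseq \<omega>)"
  shows "(\<Sum>j=1..nu \<omega>. (pi_rv \<omega> j)\<^sup>2) \<le> 1"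
proof (cases "nu \<omega> = 0")
  case False
  then have "leaves (tree_nu \<omega>) = nu \<omega>"
    unfolding tree_nu_def by (intro leaves_tau assms) simp
  then show ?thesis using sum_pi_star_sq[of "tree_nu \<omega>" "phis \<omega>"] by (simp add: pi_rv_def)
qed simp

lemma abs_le_root4:
  fixes x W :: real
  assumes "x ^ 4 \<le> W"
  shows "\<bar>x\<bar> \<le> W powr (1/4)"
proof (rule ccontr)
  assume "\<not> \<bar>x\<bar> \<le> W powr (1/4)"
  then have "(W powr (1/4)) ^ 4 < \<bar>x\<bar> ^ 4"
    by (intro power_strict_mono) auto
  moreover have "0 \<le> x ^ 4" by simp
  then have "0 \<le> W" using assms by linarith
  then have "(W powr (1/4)) ^ 4 = W"
    by (cases "W = 0") (simp_all add: powr_realpow[symmetric] powr_powr)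
  ultimately show False using assms by (simp add: power_even_abs)
qed

text \<open>On \<open>[0, R]\<close> with \<open>R = (m\<^sub>4 W)\<^sup>-\<^sup>1\<^sup>/\<^sup>4 / 2\<close> every rescaled weight \<open>\<rho> \<pi>\<^sub>j\<close> stays below
  the non-random constant \<open>m\<^sub>4\<^sup>-\<^sup>1\<^sup>/\<^sup>4 / 2\<close>, since \<open>\<pi>\<^sub>j\<^sup>4 \<le> W\<close>.\<close>
lemma rho_pi_rv_bound:
  assumes m4: "0 \<le> moment4 \<mu>" and rho: "0 \<le> \<rho>" "\<rho> \<le> R_rv \<mu> \<omega>" and j: "j \<in> {1..nu \<omega>}"
  shows "\<rho> * \<bar>pi_rv \<omega> j\<bar> \<le> moment4 \<mu> powr (-1/4) / 2"
proof (cases "moment4 \<mu> * W_rv \<omega> = 0")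
  case True
  then have "R_rv \<mu> \<omega> = 0" by (simp add: R_rv_def)
  then show ?thesis using rho by simp
next
  case False
  have "0 \<le> W_rv \<omega>" unfolding W_rv_def by (intro sum_nonneg) simp
  with False m4 have m_pos: "0 < moment4 \<mu>" and W_pos: "0 < W_rv \<omega>"
    by (auto simp: less_le)
  have "(pi_rv \<omega> j) ^ 4 \<le> W_rv \<omega>"
    unfolding W_rv_def by (rule member_le_sum) (use j in auto)
  then have pi_le: "\<bar>pi_rv \<omega> j\<bar> \<le> W_rv \<omega> powr (1/4)"
    by (rule abs_le_root4)
  have "\<rho> * \<bar>pi_rv \<omega> j\<bar> \<le> R_rv \<mu> \<omega> * W_rv \<omega> powr (1/4)"
    using rho pi_le by (intro mult_mono) (auto simp: R_rv_def)
  also have "\<dots> = moment4 \<mu> powr (-1/4) / 2 * (W_rv \<omega> powr (-1/4) * W_rv \<omega> powr (1/4))"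
    using m_pos W_pos by (simp add: R_rv_def powr_mult)
  also have "W_rv \<omega> powr (-1/4) * W_rv \<omega> powr (1/4) = 1"
    using W_pos by (simp add: powr_add[symmetric])
  finally show ?thesis by simp
qed

lemma orthogonal_Ml: "orthogonal_matrix (Ml \<phi> \<theta>)"
  unfolding orthogonal_matrix_def Ml_def
  apply (simp add: vec_eq_iff forall_3 matrix_matrix_mult_def transpose_def sum_3 mat_def vector_3)
  apply (insert sin_cos_squared_add[of \<phi>] sin_cos_squared_add[of \<theta>])
  apply (intro conjI; algebra)
  done

lemma orthogonal_Mr: "orthogonal_matrix (Mr \<phi> \<theta>)"
  unfolding orthogonal_matrix_def Mr_def
  apply (simp add: vec_eq_iff forall_3 matrix_matrix_mult_def transpose_def sum_3 mat_def vector_3)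
  apply (insert sin_cos_squared_add[of \<phi>] sin_cos_squared_add[of \<theta>])
  apply (intro conjI; algebra)
  done

lemma orthogonal_O_star: "orthogonal_matrix (O_star t \<phi> \<theta> j)"
  by (induction t arbitrary: \<phi> \<theta> j)
     (auto simp: Let_def orthogonal_matrix_mul orthogonal_Ml orthogonal_Mr orthogonal_matrix_id)

lemma norm_orthogonal_mult: "orthogonal_matrix A \<Longrightarrow> norm (A *v x) = norm x"
  for A :: "real^'n^'n"
  by (rule orthogonal_transformation_norm)
     (simp add: orthogonal_transformation_matrix matrix_vector_mul_linear)

lemma norm_rotated_e3:
  assumes "admissible_B B" and "u \<in> sphere 0 1"
  shows "norm (B u *v (O_star t \<phi> \<theta> j *v e3)) = 1"
  using assms norm_orthogonal_mult[OF orthogonal_O_star]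
  by (simp add: admissible_B_def norm_orthogonal_mult e3_def)

lemma continuous_on_matrix_entries:
  fixes f :: "'a::topological_space \<Rightarrow> real^'n^'m"
  assumes "\<And>i j. continuous_on S (\<lambda>x. f x $ i $ j)"
  shows "continuous_on S f"
proof -
  have entries: "f = (\<lambda>x. \<chi> i. \<chi> j. f x $ i $ j)" by (simp add: vec_eq_iff)
  show ?thesis by (subst entries) (intro continuous_on_vec_lambda assms)
qed

lemma continuous_Ml: "continuous_on UNIV (Ml \<phi>)"
proof -
  have "\<forall>i j::3. continuous_on UNIV (\<lambda>\<theta>. Ml \<phi> \<theta> $ i $ j)"
    unfolding forall_3 Ml_def vector_3 by (intro conjI continuous_intros)
  then show ?thesis by (intro continuous_on_matrix_entries) auto
qed

lemma continuous_Mr: "continuous_on UNIV (Mr \<phi>)"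
proof -
  have "\<forall>i j::3. continuous_on UNIV (\<lambda>\<theta>. Mr \<phi> \<theta> $ i $ j)"
    unfolding forall_3 Mr_def vector_3 by (intro conjI continuous_intros)
  then show ?thesis by (intro continuous_on_matrix_entries) auto
qed

lemma measurable_O_star:
  assumes "\<And>i. (\<lambda>x. \<Theta> x i) \<in> borel_measurable M"
  shows "(\<lambda>x. O_star t \<phi> (\<Theta> x) j) \<in> borel_measurable M"
  using assms
proof (induction t arbitrary: \<phi> \<Theta> j)
  case (Node l r)
  have mult: "continuous_on UNIV (\<lambda>x::(real^3^3) \<times> (real^3^3). fst x ** snd x)"
    unfolding matrix_matrix_mult_def by (intro continuous_intros)
  have mult_meas: "(\<lambda>x. A x ** C x) \<in> borel_measurable M"
    if "A \<in> borel_measurable M" "C \<in> borel_measurable M" for A C :: "_ \<Rightarrow> real^3^3"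
    by (rule borel_measurable_continuous_Pair[where H="\<lambda>a b. a ** b", OF that]) (simp add: mult)
  have "(\<lambda>x. Ml (\<phi> n) (\<Theta> x n)) \<in> borel_measurable M"
    and "(\<lambda>x. Mr (\<phi> n) (\<Theta> x n)) \<in> borel_measurable M" for n
    by (rule measurable_compose[OF Node.prems borel_measurable_continuous_onI],
        simp add: continuous_Ml continuous_Mr)+
  then show ?case
    by (cases "j \<le> leaves l") (auto simp: Let_def intro!: mult_meas Node.IH Node.prems)
qed simp

lemma measurable_theta_coordinate: "(\<lambda>\<theta>. \<theta> i) \<in> borel_measurable (PiM I (\<lambda>_. unif_theta))"
proof (cases "i \<in> I")
  case True
  have "(\<lambda>\<theta>. \<theta> i) \<in> measurable (PiM I (\<lambda>_. unif_theta)) unif_theta"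
    by (rule measurable_component_singleton[OF True])
  moreover have "sets unif_theta = sets borel" by (simp add: unif_theta_def)
  ultimately show ?thesis using measurable_cong_sets by blast
next
  case False
  then have "(\<lambda>\<theta>. \<theta> i) \<in> borel_measurable (PiM I (\<lambda>_. unif_theta)) \<longleftrightarrow>
      (\<lambda>\<theta>. undefined :: real) \<in> borel_measurable (PiM I (\<lambda>_. unif_theta))"
    by (intro measurable_cong) (auto simp: space_PiM PiE_def extensional_def)
  then show ?thesis by simp
qed

lemma measurable_char3:
  assumes "sigma_finite_measure \<mu>" and "sets \<mu> = sets borel"
  shows "char3 \<mu> \<in> borel_measurable borel"
proof -
  have "snd \<in> borel_measurable (borel \<Otimes>\<^sub>M \<mu>)"
    using measurable_snd[of borel \<mu>] measurable_cong_sets[OF refl assms(2)] by blast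
  then have "(\<lambda>p::(real^3) \<times> (real^3). cis (fst p \<bullet> snd p)) \<in> borel_measurable (borel \<Otimes>\<^sub>M \<mu>)"
    by (intro borel_measurable_continuous_Pair[where H="\<lambda>a b. cis (a \<bullet> b)"] measurable_fst)
       (auto intro!: continuous_intros)
  then have "(\<lambda>\<xi>. \<integral>v. cis (\<xi> \<bullet> v) \<partial>\<mu>) \<in> borel_measurable borel"
    by (intro sigma_finite_measure.borel_measurable_lebesgue_integral[OF assms(1)])
       (simp add: case_prod_beta')
  then show ?thesis unfolding char3_def[abs_def] .
qed

section \<open>Differentiation of products and of parameter integrals\<close>

lemma has_vector_derivative_iff_quotient:
  fixes f :: "real \<Rightarrow> 'b::real_normed_vector"
  shows "(f has_vector_derivative D) (at x) \<longleftrightarrow> ((\<lambda>h. (f (x + h) - f x) /\<^sub>R h) \<longlongrightarrow> D) (at 0)"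
proof -
  have "\<forall>\<^sub>F h in at (0::real). norm (f (x + h) - f x - h *\<^sub>R D) / norm h =
      norm ((f (x + h) - f x) /\<^sub>R h - D)"
  proof (rule eventually_mono[OF eventually_at_filter[THEN iffD2]])
    fix h :: real assume "h \<noteq> 0"
    then have "f (x + h) - f x - h *\<^sub>R D = h *\<^sub>R ((f (x + h) - f x) /\<^sub>R h - D)"
      by (simp add: algebra_simps)
    then show "norm (f (x + h) - f x - h *\<^sub>R D) / norm h = norm ((f (x + h) - f x) /\<^sub>R h - D)"
      using \<open>h \<noteq> 0\<close> by simp
  qed simp
  then have "((\<lambda>h. norm (f (x + h) - f x - h *\<^sub>R D) / norm h) \<longlongrightarrow> 0) (at 0) \<longleftrightarrow>
      ((\<lambda>h. norm ((f (x + h) - f x) /\<^sub>R h - D)) \<longlongrightarrow> 0) (at 0)"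
    by (rule tendsto_cong)
  then show ?thesis
    unfolding has_vector_derivative_def has_derivative_at
    by (simp add: bounded_linear_scaleR_left tendsto_norm_zero_iff LIM_zero_iff)
qed

lemma norm_diff_le_derivative_bound:
  fixes f :: "real \<Rightarrow> 'b::real_normed_vector"
  assumes "\<And>s. (f has_vector_derivative f' s) (at s)" and "\<And>s. norm (f' s) \<le> B"
  shows "norm (f x - f y) \<le> B * \<bar>x - y\<bar>"
proof -
  have "norm (f x - f y) \<le> B * norm (x - y)"
  proof (rule differentiable_bound[of UNIV f "\<lambda>s h. h *\<^sub>R f' s"])
    show "(f has_derivative (\<lambda>h. h *\<^sub>R f' s)) (at s within UNIV)" for s
      using assms(1)[of s] by (simp add: has_vector_derivative_def)
    show "onorm (\<lambda>h. h *\<^sub>R f' s) \<le> B" for s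
      by (rule onorm_le) (use assms(2)[of s] in \<open>auto intro: mult_left_mono simp: mult.commute[of B]\<close>)
  qed auto
  then show ?thesis by simp
qed

text \<open>The difference quotients converge
  pointwise and are dominated by \<open>g\<close>, so dominated convergence applies.\<close>
lemma has_vector_derivative_integral:
  fixes f f' :: "real \<Rightarrow> 'a \<Rightarrow> 'b::{banach, second_countable_topology}"
  assumes f_meas: "\<And>s. f s \<in> borel_measurable M"
    and f_int: "\<And>s. integrable M (f s)"
    and deriv: "\<And>s x. x \<in> space M \<Longrightarrow> ((\<lambda>s. f s x) has_vector_derivative f' s x) (at s)"
    and g: "integrable M g" and dominated: "\<And>s x. x \<in> space M \<Longrightarrow> norm (f' s x) \<le> g x"
  shows "f' r \<in> borel_measurable M" and "integrable M (f' r)"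
    and "((\<lambda>s. integral\<^sup>L M (f s)) has_vector_derivative integral\<^sup>L M (f' r)) (at r)"
proof -
  define Q where "Q h x = (f (r + h) x - f r x) /\<^sub>R h" for h x
  have Q_meas: "Q h \<in> borel_measurable M" for h
    unfolding Q_def using f_meas by measurable
  have Q_dominated: "norm (Q h x) \<le> g x" if "x \<in> space M" for h x
  proof (cases "h = 0")
    case True
    then show ?thesis using order_trans[OF norm_ge_zero dominated[OF that, of 0]] by (simp add: Q_def)
  next
    case False
    have "norm (f (r + h) x - f r x) \<le> g x * \<bar>(r + h) - r\<bar>"
      by (rule norm_diff_le_derivative_bound[where f="\<lambda>s. f s x"])
         (use deriv[OF that] dominated[OF that] in auto)
    then show ?thesis using False by (simp add: Q_def divide_simps)
  qed
  have Q_lim: "(\<lambda>i. Q (X i) x) \<longlonglongrightarrow> f' r x"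
    if "x \<in> space M" "\<forall>i. X i \<noteq> 0" "X \<longlonglongrightarrow> 0" for X x
    using deriv[OF that(1), of r] that(2,3)
    unfolding has_vector_derivative_iff_quotient tendsto_at_iff_sequentially
    by (auto simp: comp_def Q_def)
  have X0: "\<forall>i. inverse (real (Suc i)) \<noteq> 0" "(\<lambda>i. inverse (real (Suc i))) \<longlonglongrightarrow> 0"
    using LIMSEQ_inverse_real_of_nat by auto
  show f'_meas: "f' r \<in> borel_measurable M"
    by (rule borel_measurable_LIMSEQ_metric[OF Q_meas Q_lim[OF _ X0]])
  show "integrable M (f' r)"
    by (rule Bochner_Integration.integrable_bound[OF g f'_meas])
       (use dominated in \<open>auto intro!: AE_I2 intro: order_trans[OF _ abs_ge_self]\<close>)
  have "((\<lambda>h. (integral\<^sup>L M (f (r + h)) - integral\<^sup>L M (f r)) /\<^sub>R h) \<longlongrightarrow> integral\<^sup>L M (f' r)) (at 0)"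
    unfolding tendsto_at_iff_sequentially comp_def
  proof (intro allI impI)
    fix X :: "nat \<Rightarrow> real" assume X: "\<forall>i. X i \<in> UNIV - {0}" "X \<longlonglongrightarrow> 0"
    have "(\<lambda>i. integral\<^sup>L M (Q (X i))) \<longlonglongrightarrow> integral\<^sup>L M (f' r)"
      by (rule integral_dominated_convergence[OF f'_meas Q_meas g])
         (use Q_lim X Q_dominated in \<open>auto intro!: AE_I2\<close>)
    moreover have "integral\<^sup>L M (Q h) = (integral\<^sup>L M (f (r + h)) - integral\<^sup>L M (f r)) /\<^sub>R h" for h
      unfolding Q_def using f_int by simp
    ultimately show "(\<lambda>i. (integral\<^sup>L M (f (r + X i)) - integral\<^sup>L M (f r)) /\<^sub>R X i)
        \<longlonglongrightarrow> integral\<^sup>L M (f' r)"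
      by simp
  qed
  then show "((\<lambda>s. integral\<^sup>L M (f s)) has_vector_derivative integral\<^sup>L M (f' r)) (at r)"
    unfolding has_vector_derivative_iff_quotient .
qed

definition twice_differentiable :: "(real \<Rightarrow> complex) \<Rightarrow> bool" where
  "twice_differentiable f \<longleftrightarrow>
     (\<forall>x. (f has_vector_derivative dr f x) (at x)) \<and>
     (\<forall>x. (dr f has_vector_derivative dr (dr f) x) (at x))"

lemma dr_eqI: "(\<And>x. (f has_vector_derivative f' x) (at x)) \<Longrightarrow> dr f = f'"
  unfolding dr_def by (auto intro!: ext vector_derivative_at)

lemma twice_differentiableI:
  assumes f': "\<And>x. (f has_vector_derivative f' x) (at x)"
    and f'': "\<And>x. (f' has_vector_derivative f'' x) (at x)"
  shows "twice_differentiable f" and "dr f = f'" and "dr (dr f) = f''"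
proof -
  show dr1: "dr f = f'" by (rule dr_eqI[OF f'])
  have dr2: "dr f' = f''" by (rule dr_eqI[OF f''])
  then show "dr (dr f) = f''" unfolding dr1 .
  show "twice_differentiable f"
    unfolding twice_differentiable_def dr1 dr2 using f' f'' by blast
qed

lemma twice_differentiable_mult:
  assumes f: "twice_differentiable f" and g: "twice_differentiable g"
  shows "twice_differentiable (\<lambda>s. f s * g s)"
    and "dr (\<lambda>s. f s * g s) = (\<lambda>s. f s * dr g s + dr f s * g s)"
    and "dr (dr (\<lambda>s. f s * g s)) =
           (\<lambda>s. f s * dr (dr g) s + 2 * (dr f s * dr g s) + dr (dr f) s * g s)"
proof -
  have "((\<lambda>s. f s * g s) has_vector_derivative f x * dr g x + dr f x * g x) (at x)" for x
    using f g unfolding twice_differentiable_def by (auto intro: has_vector_derivative_mult)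
  moreover have "((\<lambda>s. f s * dr g s + dr f s * g s) has_vector_derivative
      f x * dr (dr g) x + 2 * (dr f x * dr g x) + dr (dr f) x * g x) (at x)" for x
  proof -
    have "((\<lambda>s. f s * dr g s + dr f s * g s) has_vector_derivative
        (f x * dr (dr g) x + dr f x * dr g x) + (dr f x * dr g x + dr (dr f) x * g x)) (at x)"
      using f g unfolding twice_differentiable_def
      by (intro has_vector_derivative_add has_vector_derivative_mult) auto
    then show ?thesis by (simp add: algebra_simps mult_2)
  qed
  ultimately show "twice_differentiable (\<lambda>s. f s * g s)"
    and "dr (\<lambda>s. f s * g s) = (\<lambda>s. f s * dr g s + dr f s * g s)"
    and "dr (dr (\<lambda>s. f s * g s)) =
           (\<lambda>s. f s * dr (dr g) s + 2 * (dr f s * dr g s) + dr (dr f) s * g s)"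
    by (rule twice_differentiableI)+
qed

lemma dr_const: "dr (\<lambda>s. c) = (\<lambda>s. 0)"
  by (rule dr_eqI) (rule has_vector_derivative_const)

lemma twice_differentiable_const: "twice_differentiable (\<lambda>s. c)"
  unfolding twice_differentiable_def dr_const by (simp add: has_vector_derivative_const)

lemma twice_differentiable_prod:
  assumes "finite J" and "\<And>j. j \<in> J \<Longrightarrow> twice_differentiable (f j)"
  shows "twice_differentiable (\<lambda>s. \<Prod>j\<in>J. f j s)"
  using assms
proof (induction J rule: finite_induct)
  case (insert i J)
  then show ?case by (simp add: twice_differentiable_mult(1))
qed (simp add: twice_differentiable_const)

lemma prod_derivative_bounds:
  fixes f :: "'i \<Rightarrow> real \<Rightarrow> complex"
  assumes "finite J" and "\<And>j. j \<in> J \<Longrightarrow> twice_differentiable (f j)"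
    and "\<And>j. j \<in> J \<Longrightarrow> 0 \<le> g j \<and> 0 \<le> A j \<and> 0 \<le> B j"
    and "\<And>j. j \<in> J \<Longrightarrow>
           norm (f j r) \<le> g j \<and> norm (dr (f j) r) \<le> A j * g j \<and> norm (dr (dr (f j)) r) \<le> B j * g j"
  shows "norm (\<Prod>j\<in>J. f j r) \<le> (\<Prod>j\<in>J. g j) \<and>
    norm (dr (\<lambda>s. \<Prod>j\<in>J. f j s) r) \<le> (\<Sum>j\<in>J. A j) * (\<Prod>j\<in>J. g j) \<and>
    norm (dr (dr (\<lambda>s. \<Prod>j\<in>J. f j s)) r) \<le> ((\<Sum>j\<in>J. B j) + (\<Sum>j\<in>J. A j)\<^sup>2) * (\<Prod>j\<in>J. g j)"
  using assms
proof (induction J rule: finite_induct)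
  case empty
  then show ?case by (simp add: dr_const)
next
  case (insert i J)
  define F where "F = (\<lambda>s. \<Prod>j\<in>J. f j s)"
  define G S T where "G = (\<Prod>j\<in>J. g j)" and "S = (\<Sum>j\<in>J. A j)" and "T = (\<Sum>j\<in>J. B j)"
  have IH: "norm (F r) \<le> G" "norm (dr F r) \<le> S * G" "norm (dr (dr F) r) \<le> (T + S\<^sup>2) * G"
    using insert by (simp_all add: F_def G_def S_def T_def)
  have nonneg: "0 \<le> g i" "0 \<le> A i" "0 \<le> B i" "0 \<le> G" "0 \<le> S" "0 \<le> T"
    using insert.prems(2) by (auto simp: G_def S_def T_def intro!: prod_nonneg sum_nonneg)
  have bound_i: "norm (f i r) \<le> g i" "norm (dr (f i) r) \<le> A i * g i" "norm (dr (dr (f i)) r) \<le> B i * g i"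
    using insert.prems(3) by auto
  have diff: "twice_differentiable (f i)" "twice_differentiable F"
    using insert.prems(1) insert.hyps(1) unfolding F_def by (auto intro: twice_differentiable_prod)
  have split: "(\<lambda>s. \<Prod>j\<in>insert i J. f j s) = (\<lambda>s. f i s * F s)"
    using insert.hyps by (simp add: F_def)
  have prods: "(\<Prod>j\<in>insert i J. g j) = g i * G" "(\<Sum>j\<in>insert i J. A j) = A i + S"
      "(\<Sum>j\<in>insert i J. B j) = B i + T" "(\<Prod>j\<in>insert i J. f j r) = f i r * F r"
    using insert.hyps by (simp_all add: F_def G_def S_def T_def)
  have "norm (f i r * F r) \<le> g i * G"
    unfolding norm_mult using bound_i IH nonneg by (intro mult_mono) auto
  moreover have "norm (f i r * dr F r + dr (f i) r * F r) \<le> (A i + S) * (g i * G)"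
  proof -
    have "norm (f i r * dr F r + dr (f i) r * F r) \<le> g i * (S * G) + (A i * g i) * G"
      using bound_i IH nonneg norm_ge_zero[of "F r"]
      by (intro order_trans[OF norm_triangle_ineq] add_mono)
         (auto simp: norm_mult intro!: mult_mono)
    then show ?thesis by (simp add: algebra_simps)
  qed
  moreover have "norm (f i r * dr (dr F) r + 2 * (dr (f i) r * dr F r) + dr (dr (f i)) r * F r)
      \<le> ((B i + T) + (A i + S)\<^sup>2) * (g i * G)"
  proof -
    have "norm (f i r * dr (dr F) r + 2 * (dr (f i) r * dr F r) + dr (dr (f i)) r * F r)
        \<le> g i * ((T + S\<^sup>2) * G) + 2 * ((A i * g i) * (S * G)) + (B i * g i) * G"
      using bound_i IH nonneg norm_ge_zero[of "F r"] norm_ge_zero[of "dr F r"]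
      by (intro order_trans[OF norm_triangle_ineq] add_mono order_trans[OF norm_triangle_ineq])
         (auto simp: norm_mult intro!: mult_mono)
    also have "\<dots> \<le> ((B i + T) + (A i + S)\<^sup>2) * (g i * G)"
      using mult_nonneg_nonneg[OF zero_le_power2[of "A i"] mult_nonneg_nonneg[OF nonneg(1,4)]]
      by (simp add: algebra_simps power2_eq_square)
    finally show ?thesis .
  qed
  ultimately show ?case
    unfolding prods split
    unfolding twice_differentiable_mult(3)[OF diff]
    unfolding twice_differentiable_mult(2)[OF diff] by simp
qed

lemma twice_differentiable_integral:
  fixes F :: "'a \<Rightarrow> real \<Rightarrow> complex"
  assumes M: "finite_measure M"
    and meas: "\<And>s. (\<lambda>\<theta>. F \<theta> s) \<in> borel_measurable M"
    and diff: "\<And>\<theta>. \<theta> \<in> space M \<Longrightarrow> twice_differentiable (F \<theta>)"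
    and bounded: "\<And>\<theta> s. \<theta> \<in> space M \<Longrightarrow>
      norm (F \<theta> s) \<le> C0 \<and> norm (dr (F \<theta>) s) \<le> C1 \<and> norm (dr (dr (F \<theta>)) s) \<le> C2"
  shows "twice_differentiable (\<lambda>s. \<integral>\<theta>. F \<theta> s \<partial>M)"
    and "dr (\<lambda>s. \<integral>\<theta>. F \<theta> s \<partial>M) = (\<lambda>s. \<integral>\<theta>. dr (F \<theta>) s \<partial>M)"
    and "dr (dr (\<lambda>s. \<integral>\<theta>. F \<theta> s \<partial>M)) = (\<lambda>s. \<integral>\<theta>. dr (dr (F \<theta>)) s \<partial>M)"
    and "integrable M (\<lambda>\<theta>. dr (F \<theta>) s)" and "integrable M (\<lambda>\<theta>. dr (dr (F \<theta>)) s)"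
proof -
  interpret finite_measure M by (rule M)
  have const: "integrable M (\<lambda>_. C)" for C :: real
    by (rule integrable_const_bound[where B="\<bar>C\<bar>"]) auto
  have F_int: "integrable M (\<lambda>\<theta>. F \<theta> s)" for s
    by (rule integrable_const_bound[where B=C0]) (use bounded meas in auto)
  note D1 = has_vector_derivative_integral[where f="\<lambda>s \<theta>. F \<theta> s" and f'="\<lambda>s \<theta>. dr (F \<theta>) s",
      OF meas F_int _ const[of C1]]
  have D1_hyps: "((\<lambda>s. F \<theta> s) has_vector_derivative dr (F \<theta>) s) (at s)"
    "norm (dr (F \<theta>) s) \<le> C1" if "\<theta> \<in> space M" for \<theta> s
    using diff[OF that] bounded[OF that] unfolding twice_differentiable_def by auto
  note D2 = has_vector_derivative_integral[where f="\<lambda>s \<theta>. dr (F \<theta>) s"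
      and f'="\<lambda>s \<theta>. dr (dr (F \<theta>)) s", OF D1(1) D1(2) _ const[of C2], OF D1_hyps D1_hyps]
  have D2_hyps: "((\<lambda>s. dr (F \<theta>) s) has_vector_derivative dr (dr (F \<theta>)) s) (at s)"
    "norm (dr (dr (F \<theta>)) s) \<le> C2" if "\<theta> \<in> space M" for \<theta> s
    using diff[OF that] bounded[OF that] unfolding twice_differentiable_def by auto
  show "integrable M (\<lambda>\<theta>. dr (F \<theta>) s)" by (rule D1(2)) (use D1_hyps in auto)
  show "integrable M (\<lambda>\<theta>. dr (dr (F \<theta>)) s)" by (rule D2(2)) (use D2_hyps in auto)
  have "((\<lambda>s. \<integral>\<theta>. F \<theta> s \<partial>M) has_vector_derivative (\<integral>\<theta>. dr (F \<theta>) s \<partial>M)) (at s)"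
    and "((\<lambda>s. \<integral>\<theta>. dr (F \<theta>) s \<partial>M) has_vector_derivative (\<integral>\<theta>. dr (dr (F \<theta>)) s \<partial>M)) (at s)" for s
    by (rule D1(3) D2(3); use D1_hyps D2_hyps in auto)+
  then show "twice_differentiable (\<lambda>s. \<integral>\<theta>. F \<theta> s \<partial>M)"
    and "dr (\<lambda>s. \<integral>\<theta>. F \<theta> s \<partial>M) = (\<lambda>s. \<integral>\<theta>. dr (F \<theta>) s \<partial>M)"
    and "dr (dr (\<lambda>s. \<integral>\<theta>. F \<theta> s \<partial>M)) = (\<lambda>s. \<integral>\<theta>. dr (dr (F \<theta>)) s \<partial>M)"
    by (rule twice_differentiableI)+
qed

lemma bounds_atI:
  assumes "twice_differentiable f" and "norm (f \<rho>) \<le> \<Psi> \<rho>"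
    and "norm (dr f \<rho>) \<le> poly p1 \<rho> * \<Psi> \<rho>" and "norm (dr (dr f) \<rho>) \<le> poly p2 \<rho> * \<Psi> \<rho>"
  shows "bounds_at f \<Psi> p1 p2 \<rho>"
  using assms unfolding bounds_at_def twice_differentiable_def by blast

lemma (in prob_space) norm_integral_le_const:
  fixes h :: "'a \<Rightarrow> 'b::{banach, second_countable_topology}"
  assumes "integrable M h" and "\<And>\<theta>. \<theta> \<in> space M \<Longrightarrow> norm (h \<theta>) \<le> C"
  shows "norm (integral\<^sup>L M h) \<le> C"
  by (rule order_trans[OF integral_norm_bound integral_le_const]) (use assms in \<open>auto intro: AE_I2\<close>)

lemma bounds_at_integral:
  fixes F :: "'a \<Rightarrow> real \<Rightarrow> complex"
  assumes M: "prob_space M"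
    and meas: "\<And>s. (\<lambda>\<theta>. F \<theta> s) \<in> borel_measurable M"
    and diff: "\<And>\<theta>. \<theta> \<in> space M \<Longrightarrow> twice_differentiable (F \<theta>)"
    and bounded: "\<And>\<theta> s. \<theta> \<in> space M \<Longrightarrow>
      norm (F \<theta> s) \<le> C0 \<and> norm (dr (F \<theta>) s) \<le> C1 \<and> norm (dr (dr (F \<theta>)) s) \<le> C2"
    and bounds: "\<And>\<theta>. \<theta> \<in> space M \<Longrightarrow> bounds_at (F \<theta>) \<Psi> p1 p2 \<rho>"
  shows "bounds_at (\<lambda>s. \<integral>\<theta>. F \<theta> s \<partial>M) \<Psi> p1 p2 \<rho>"
proof -
  interpret prob_space M by (rule M)
  note avg = twice_differentiable_integral[OF finite_measure_axioms meas diff bounded]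
  have F_int: "integrable M (\<lambda>\<theta>. F \<theta> \<rho>)"
    by (rule integrable_const_bound[where B=C0]) (use bounded meas in auto)
  have bound_\<rho>: "norm (F \<theta> \<rho>) \<le> \<Psi> \<rho>" "norm (dr (F \<theta>) \<rho>) \<le> poly p1 \<rho> * \<Psi> \<rho>"
      "norm (dr (dr (F \<theta>)) \<rho>) \<le> poly p2 \<rho> * \<Psi> \<rho>" if "\<theta> \<in> space M" for \<theta>
    using bounds[OF that] unfolding bounds_at_def by auto
  show ?thesis
  proof (rule bounds_atI[OF avg(1)])
    show "norm (\<integral>\<theta>. F \<theta> \<rho> \<partial>M) \<le> \<Psi> \<rho>"
      by (rule norm_integral_le_const[OF F_int bound_\<rho>(1)])
    show "norm (dr (\<lambda>s. \<integral>\<theta>. F \<theta> s \<partial>M) \<rho>) \<le> poly p1 \<rho> * \<Psi> \<rho>"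
      using norm_integral_le_const[OF avg(4) bound_\<rho>(2)] by (simp add: avg(2))
    show "norm (dr (dr (\<lambda>s. \<integral>\<theta>. F \<theta> s \<partial>M)) \<rho>) \<le> poly p2 \<rho> * \<Psi> \<rho>"
      using norm_integral_le_const[OF avg(5) bound_\<rho>(3)] by (simp add: avg(3))
  qed
qed

section \<open>Derivatives of the characteristic function along a ray\<close>

lemma has_vector_derivative_cis_ray:
  "((\<lambda>s. cis (s * x)) has_vector_derivative \<i> * complex_of_real x * cis (r * x)) (at r)"
  unfolding has_vector_derivative_def
  by (auto intro!: derivative_eq_intros simp: fun_eq_iff scaleR_conv_of_real algebra_simps)

lemma norm_cis_minus_1: "norm (cis x - 1) \<le> \<bar>x\<bar>"
proof -
  have "norm (cis x - cis 0) \<le> 1 * \<bar>x - 0\<bar>"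
    by (rule norm_diff_le_derivative_bound[where f=cis and f'="\<lambda>s. \<i> * cis s"])
       (auto simp: has_vector_derivative_def norm_mult intro!: derivative_eq_intros)
  then show ?thesis by simp
qed

lemma inner_square_le: "(a \<bullet> b)\<^sup>2 \<le> (norm a)\<^sup>2 * (norm b)\<^sup>2"
  for a b :: "'a::real_inner"
proof -
  have "\<bar>a \<bullet> b\<bar>\<^sup>2 \<le> (norm a * norm b)\<^sup>2"
    by (rule power_mono[OF Cauchy_Schwarz_ineq2]) simp
  then show ?thesis by (simp add: power_mult_distrib)
qed

lemma le_one_plus_square: "t \<le> 1 + t\<^sup>2" for t :: real
proof -
  have "0 \<le> t\<^sup>2 + 1 - 2 * t"
    using zero_le_power2[of "t - 1"] by (simp add: power2_diff)
  then show ?thesis using zero_le_power2[of t] by linarith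
qed

lemma integrable_square_norm:
  fixes \<mu> :: "'a::real_normed_vector measure"
  assumes "finite_measure \<mu>" and "sets \<mu> = sets borel" and "integrable \<mu> (\<lambda>v. norm v ^ 4)"
  shows "integrable \<mu> (\<lambda>v. (norm v)\<^sup>2)"
proof (rule Bochner_Integration.integrable_bound[where f="\<lambda>v. 1 + norm v ^ 4"])
  have "integrable \<mu> (\<lambda>_. 1::real)"
    by (rule finite_measure.integrable_const_bound[OF assms(1), where B=1]) auto
  then show "integrable \<mu> (\<lambda>v. 1 + norm v ^ 4)"
    using assms(3) by (rule Bochner_Integration.integrable_add)
  have "(\<lambda>v. (norm v)\<^sup>2) \<in> borel_measurable borel" by simp
  then show "(\<lambda>v. (norm v)\<^sup>2) \<in> borel_measurable \<mu>"
    using measurable_cong_sets[OF assms(2) refl] by blast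
  have "(norm x)\<^sup>2 \<le> 1 + norm x ^ 4" for x :: 'a
    using le_one_plus_square[of "(norm x)\<^sup>2"] by (simp flip: power_mult)
  then show "AE x in \<mu>. norm ((norm x)\<^sup>2) \<le> norm (1 + norm x ^ 4)"
    by (auto intro!: AE_I2)
qed

locale centered_measure =
  fixes \<mu> :: "(real^3) measure"
  assumes prob: "prob_space \<mu>" and sets_eq: "sets \<mu> = sets borel"
    and second_moment: "integrable \<mu> (\<lambda>v. (norm v)\<^sup>2)"
    and mean_zero: "\<forall>i. integral\<^sup>L \<mu> (\<lambda>v. v $ i) = 0"
begin

interpretation P: prob_space \<mu> by (rule prob)

definition m1 :: real where "m1 = integral\<^sup>L \<mu> (\<lambda>v. norm v)"
definition m2 :: real where "m2 = integral\<^sup>L \<mu> (\<lambda>v. (norm v)\<^sup>2)"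

lemma m1_nonneg: "0 \<le> m1"
  unfolding m1_def by simp

lemma m2_nonneg: "0 \<le> m2"
  unfolding m2_def by simp

lemma continuous_measurable: "continuous_on UNIV f \<Longrightarrow> f \<in> borel_measurable \<mu>"
  using measurable_cong_sets[OF sets_eq refl] borel_measurable_continuous_onI by blast

lemma first_moment: "integrable \<mu> (\<lambda>v. norm v)"
proof (rule Bochner_Integration.integrable_bound[where f="\<lambda>v. 1 + (norm v)\<^sup>2"])
  show "integrable \<mu> (\<lambda>v. 1 + (norm v)\<^sup>2)" using second_moment by simp
  show "(\<lambda>v. norm v) \<in> borel_measurable \<mu>" by (intro continuous_measurable continuous_intros)
  show "AE x in \<mu>. norm (norm x) \<le> norm (1 + (norm x)\<^sup>2)"
  proof (rule AE_I2)
    fix x :: "real^3"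
    show "norm (norm x) \<le> norm (1 + (norm x)\<^sup>2)"
      using le_one_plus_square[of "norm x"] by simp
  qed
qed

lemma norm_char3_le_1: "norm (char3 \<mu> \<xi>) \<le> 1"
  unfolding char3_def
  by (rule P.norm_integral_le_const)
     (auto intro!: P.integrable_const_bound[where B=1] continuous_measurable continuous_intros)

lemma mean_inner_zero: "integral\<^sup>L \<mu> (\<lambda>v. a \<bullet> v) = 0"
proof -
  have coordinate: "integrable \<mu> (\<lambda>v. v $ i)" for i
    by (rule Bochner_Integration.integrable_bound[OF first_moment])
       (auto intro!: AE_I2 continuous_measurable continuous_intros simp: component_le_norm_cart)
  have "integral\<^sup>L \<mu> (\<lambda>v. a \<bullet> v) = (\<Sum>i\<in>UNIV. a $ i * integral\<^sup>L \<mu> (\<lambda>v. v $ i))"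
    using coordinate by (simp add: inner_vec_def)
  then show ?thesis using mean_zero by simp
qed

lemma char3_ray:
  shows "twice_differentiable (\<lambda>r. char3 \<mu> (r *\<^sub>R a))"
    and "dr (\<lambda>r. char3 \<mu> (r *\<^sub>R a)) =
           (\<lambda>r. \<integral>v. \<i> * complex_of_real (a \<bullet> v) * cis (r * (a \<bullet> v)) \<partial>\<mu>)"
    and "dr (dr (\<lambda>r. char3 \<mu> (r *\<^sub>R a))) =
           (\<lambda>r. \<integral>v. - complex_of_real ((a \<bullet> v)\<^sup>2) * cis (r * (a \<bullet> v)) \<partial>\<mu>)"
proof -
  define k0 k1 k2 where
    "k0 r v = cis (r * (a \<bullet> v))" and
    "k1 r v = \<i> * complex_of_real (a \<bullet> v) * cis (r * (a \<bullet> v))" and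
    "k2 r v = - complex_of_real ((a \<bullet> v)\<^sup>2) * cis (r * (a \<bullet> v))" for r v
  have meas: "k0 r \<in> borel_measurable \<mu>" "k1 r \<in> borel_measurable \<mu>" for r
    unfolding k0_def k1_def by (intro continuous_measurable continuous_intros)+
  have k0_int: "integrable \<mu> (k0 r)" for r
    by (rule P.integrable_const_bound[where B=1]) (auto simp: k0_def meas)
  have dot: "\<bar>a \<bullet> v\<bar> \<le> norm a * norm v" "(a \<bullet> v)\<^sup>2 \<le> (norm a)\<^sup>2 * (norm v)\<^sup>2" for v
    by (rule Cauchy_Schwarz_ineq2 inner_square_le)+
  have k1_le: "norm (k1 r v) \<le> norm a * norm v" and k2_le: "norm (k2 r v) \<le> (norm a)\<^sup>2 * (norm v)\<^sup>2"
    for r v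
    using dot[of v] by (simp_all add: k1_def k2_def norm_mult norm_power)
  have k1_int: "integrable \<mu> (k1 r)" for r
    by (rule Bochner_Integration.integrable_bound[where f="\<lambda>v. norm a * norm v"])
       (auto intro!: AE_I2 simp: first_moment meas k1_le)
  have k0': "((\<lambda>s. k0 s v) has_vector_derivative k1 r v) (at r)" for r v
    unfolding k0_def k1_def by (rule has_vector_derivative_cis_ray)
  have k1': "((\<lambda>s. k1 s v) has_vector_derivative k2 r v) (at r)" for r v
  proof -
    have "((\<lambda>s. \<i> * complex_of_real (a \<bullet> v) * cis (s * (a \<bullet> v))) has_vector_derivative
        \<i> * complex_of_real (a \<bullet> v) * (\<i> * complex_of_real (a \<bullet> v) * cis (r * (a \<bullet> v)))) (at r)"
      by (intro has_vector_derivative_mult_right has_vector_derivative_cis_ray)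
    then show ?thesis by (simp add: k1_def k2_def power2_eq_square algebra_simps)
  qed
  have D1: "((\<lambda>s. integral\<^sup>L \<mu> (k0 s)) has_vector_derivative integral\<^sup>L \<mu> (k1 r)) (at r)" for r
    by (rule has_vector_derivative_integral(3)[where f'=k1 and g="\<lambda>v. norm a * norm v"])
       (auto simp: meas k0_int k0' first_moment k1_le)
  have D2: "((\<lambda>s. integral\<^sup>L \<mu> (k1 s)) has_vector_derivative integral\<^sup>L \<mu> (k2 r)) (at r)" for r
    by (rule has_vector_derivative_integral(3)[where f'=k2 and g="\<lambda>v. (norm a)\<^sup>2 * (norm v)\<^sup>2"])
       (auto simp: meas k1_int k1' second_moment k2_le)
  have ray: "(\<lambda>r. char3 \<mu> (r *\<^sub>R a)) = (\<lambda>r. integral\<^sup>L \<mu> (k0 r))"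
    by (simp add: fun_eq_iff char3_def k0_def[abs_def])
  show "twice_differentiable (\<lambda>r. char3 \<mu> (r *\<^sub>R a))"
    and "dr (\<lambda>r. char3 \<mu> (r *\<^sub>R a)) =
           (\<lambda>r. \<integral>v. \<i> * complex_of_real (a \<bullet> v) * cis (r * (a \<bullet> v)) \<partial>\<mu>)"
    and "dr (dr (\<lambda>r. char3 \<mu> (r *\<^sub>R a))) =
           (\<lambda>r. \<integral>v. - complex_of_real ((a \<bullet> v)\<^sup>2) * cis (r * (a \<bullet> v)) \<partial>\<mu>)"
    unfolding ray using twice_differentiableI[OF D1 D2] by (simp_all add: k1_def[abs_def] k2_def[abs_def])
qed

lemma dr_char3_ray_le: "norm (dr (\<lambda>s. char3 \<mu> (s *\<^sub>R a)) r) \<le> norm a * m1"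
proof -
  have "norm (dr (\<lambda>s. char3 \<mu> (s *\<^sub>R a)) r) \<le> integral\<^sup>L \<mu> (\<lambda>v. norm a * norm v)"
    unfolding char3_ray(2)
    by (rule Bochner_Integration.integral_norm_bound_integral)
       (auto intro!: Bochner_Integration.integrable_bound[OF integrable_mult_right[OF first_moment, of "norm a"]]
         AE_I2 continuous_measurable continuous_intros Cauchy_Schwarz_ineq2
         simp: norm_mult abs_mult first_moment)
  then show ?thesis by (simp add: m1_def)
qed

text \<open>Since \<open>\<mu>\<close> is centred, the first derivative vanishes at the origin and grows at most
  linearly: \<open>|d/dr \<mu>(r a)| \<le> |r| |a|\<^sup>2 m\<^sub>2\<close>.\<close>
lemma dr_char3_ray_le_centered: "norm (dr (\<lambda>s. char3 \<mu> (s *\<^sub>R a)) r) \<le> \<bar>r\<bar> * (norm a)\<^sup>2 * m2"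
proof -
  define h where "h v = \<i> * complex_of_real (a \<bullet> v) * (cis (r * (a \<bullet> v)) - 1)" for v
  have h_le: "norm (h v) \<le> \<bar>r\<bar> * (norm a)\<^sup>2 * (norm v)\<^sup>2" for v
  proof -
    have "norm (h v) \<le> \<bar>a \<bullet> v\<bar> * \<bar>r * (a \<bullet> v)\<bar>"
      unfolding h_def norm_mult by (simp add: mult_left_mono norm_cis_minus_1)
    also have "\<dots> = \<bar>r\<bar> * (a \<bullet> v)\<^sup>2" by (simp add: abs_mult power2_eq_square)
    also have "\<dots> \<le> \<bar>r\<bar> * ((norm a)\<^sup>2 * (norm v)\<^sup>2)"
      by (intro mult_left_mono inner_square_le) simp
    finally show ?thesis by simp
  qed
  have h_meas: "h \<in> borel_measurable \<mu>"
    unfolding h_def by (intro continuous_measurable continuous_intros)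
  have h_int: "integrable \<mu> h"
    by (rule Bochner_Integration.integrable_bound[where f="\<lambda>v. \<bar>r\<bar> * (norm a)\<^sup>2 * (norm v)\<^sup>2"])
       (auto intro!: AE_I2 simp: second_moment h_meas intro: order_trans[OF h_le])
  have lin_int: "integrable \<mu> (\<lambda>v. \<i> * complex_of_real (a \<bullet> v))"
    by (intro integrable_mult_right integrable_of_real
          Bochner_Integration.integrable_bound[OF integrable_mult_right[OF first_moment, of "norm a"]])
       (auto intro!: AE_I2 continuous_measurable continuous_intros Cauchy_Schwarz_ineq2 simp: abs_mult)
  have lin_zero: "(\<integral>v. \<i> * complex_of_real (a \<bullet> v) \<partial>\<mu>) = 0"
    by (simp add: mean_inner_zero)
  have "dr (\<lambda>s. char3 \<mu> (s *\<^sub>R a)) r = (\<integral>v. h v + \<i> * complex_of_real (a \<bullet> v) \<partial>\<mu>)"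
    unfolding char3_ray(2) by (rule Bochner_Integration.integral_cong) (auto simp: h_def algebra_simps)
  also have "\<dots> = integral\<^sup>L \<mu> h"
    using Bochner_Integration.integral_add[OF h_int lin_int] lin_zero by simp
  also have "norm (integral\<^sup>L \<mu> h) \<le> integral\<^sup>L \<mu> (\<lambda>v. \<bar>r\<bar> * (norm a)\<^sup>2 * (norm v)\<^sup>2)"
    by (rule Bochner_Integration.integral_norm_bound_integral) (auto simp: h_int second_moment h_le)
  finally show ?thesis by (simp add: m2_def)
qed

lemma dr2_char3_ray_le: "norm (dr (dr (\<lambda>s. char3 \<mu> (s *\<^sub>R a))) r) \<le> (norm a)\<^sup>2 * m2"
proof -
  have "norm (dr (dr (\<lambda>s. char3 \<mu> (s *\<^sub>R a))) r) \<le> integral\<^sup>L \<mu> (\<lambda>v. (norm a)\<^sup>2 * (norm v)\<^sup>2)"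
    unfolding char3_ray(3)
    by (rule Bochner_Integration.integral_norm_bound_integral)
       (auto intro!: Bochner_Integration.integrable_bound[OF integrable_mult_right[OF second_moment, of "(norm a)\<^sup>2"]]
         AE_I2 continuous_measurable continuous_intros
         simp: norm_mult norm_power abs_mult second_moment inner_square_le)
  then show ?thesis by (simp add: m2_def)
qed

lemma twice_differentiable_char3_prod:
  "finite J \<Longrightarrow> twice_differentiable (\<lambda>r. \<Prod>j\<in>J. char3 \<mu> (r *\<^sub>R a j))"
  by (rule twice_differentiable_prod) (auto intro: char3_ray(1))

text \<open>Bounds on a product of characteristic functions that are uniform in \<open>r\<close>; they
  dominate the integrand when differentiating \<open>\<M>\<close> under the integral.\<close>
lemma char3_prod_uniform_bounds:
  assumes "finite J"
  shows "norm (\<Prod>j\<in>J. char3 \<mu> (r *\<^sub>R a j)) \<le> 1 \<and>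
    norm (dr (\<lambda>s. \<Prod>j\<in>J. char3 \<mu> (s *\<^sub>R a j)) r) \<le> (\<Sum>j\<in>J. norm (a j) * m1) \<and>
    norm (dr (dr (\<lambda>s. \<Prod>j\<in>J. char3 \<mu> (s *\<^sub>R a j))) r)
      \<le> (\<Sum>j\<in>J. (norm (a j))\<^sup>2 * m2) + (\<Sum>j\<in>J. norm (a j) * m1)\<^sup>2"
  using prod_derivative_bounds[OF assms, of "\<lambda>j s. char3 \<mu> (s *\<^sub>R a j)" "\<lambda>_. 1"
      "\<lambda>j. norm (a j) * m1" "\<lambda>j. (norm (a j))\<^sup>2 * m2" r]
  by (simp add: char3_ray(1) norm_char3_le_1 dr_char3_ray_le dr2_char3_ray_le m1_nonneg m2_nonneg)

end

section \<open>Bounds under the decay hypothesis on \<open>\<mu>\<^sub>0\<close>\<close>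

locale char_decay = centered_measure +
  fixes lam q :: real
  assumes lam_pos: "0 < lam" and q_nonneg: "0 \<le> q"
    and char_decay_bound: "\<forall>\<xi>. norm (char3 \<mu> \<xi>) \<le> (lam\<^sup>2 / (lam\<^sup>2 + (norm \<xi>)\<^sup>2)) powr q"
begin

definition PsiF :: "(nat \<Rightarrow> real) \<Rightarrow> nat set \<Rightarrow> real \<Rightarrow> real" where
  "PsiF w J r = (\<Prod>j\<in>J. (lam\<^sup>2 / (lam\<^sup>2 + r\<^sup>2 * (w j)\<^sup>2)) powr q)"

text \<open>A single factor of \<open>\<Psi>\<close> stays above \<open>gam c\<close> as long as \<open>r |w| \<le> c\<close>; this lets
  the derivative bounds of a factor be expressed relative to the factor itself.\<close>
definition gam :: "real \<Rightarrow> real" where "gam c = (lam\<^sup>2 / (lam\<^sup>2 + c\<^sup>2)) powr q"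
definition KK :: "real \<Rightarrow> real" where "KK c = m2 / gam c"

definition pp1 :: "real \<Rightarrow> real poly" where "pp1 c = [:1, KK c + 1, 1:]"
definition pp2 :: "real \<Rightarrow> real poly" where "pp2 c = [:KK c + 1, 1, (KK c)\<^sup>2 + 1, 1, 1:]"

lemma KK_nonneg: "0 \<le> KK c"
  unfolding KK_def gam_def using lam_pos m2_nonneg by simp

lemma pp_shape:
  "degree (pp1 c) = 2" "degree (pp2 c) = 4"
  "\<forall>i\<le>2. coeff (pp1 c) i > 0" "\<forall>i\<le>4. coeff (pp2 c) i > 0"
proof -
  have K: "0 < KK c + 1" "0 < (KK c)\<^sup>2 + 1" using KK_nonneg[of c] by (auto intro: add_nonneg_pos)
  show "degree (pp1 c) = 2" "degree (pp2 c) = 4" by (simp_all add: pp1_def pp2_def)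
  show "\<forall>i\<le>2. coeff (pp1 c) i > 0"
    using K by (auto simp: pp1_def le_Suc_eq numeral_eq_Suc coeff_pCons split: nat.split)
  show "\<forall>i\<le>4. coeff (pp2 c) i > 0"
    using K by (auto simp: pp2_def le_Suc_eq numeral_eq_Suc coeff_pCons split: nat.split)
qed

lemma pp_dominate:
  assumes "0 \<le> r" and "0 \<le> s" and "s \<le> 1"
  shows "r * KK c * s \<le> poly (pp1 c) r"
    and "KK c * s + (r * KK c * s)\<^sup>2 \<le> poly (pp2 c) r"
proof -
  define K where "K = KK c"
  have K: "0 \<le> K" by (simp add: K_def KK_nonneg)
  have rKs: "0 \<le> r * K * s" "r * K * s \<le> r * K" "K * s \<le> K"
    using assms K by (auto simp: mult_left_le)
  have pows: "0 \<le> r\<^sup>2" "0 \<le> r ^ 3" "0 \<le> r ^ 4" using assms(1) by simp_all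
  have eval1: "poly (pp1 c) r = 1 + r * K + r + r\<^sup>2"
    by (simp add: pp1_def K_def algebra_simps power2_eq_square)
  have eval2: "poly (pp2 c) r = K + 1 + r + K\<^sup>2 * r\<^sup>2 + r\<^sup>2 + r ^ 3 + r ^ 4"
    by (simp add: pp2_def K_def algebra_simps power2_eq_square power3_eq_cube power4_eq_xxxx)
  show "r * KK c * s \<le> poly (pp1 c) r"
    unfolding eval1 K_def[symmetric] using rKs(2) assms(1) pows(1) by linarith
  have "(r * K * s)\<^sup>2 \<le> (r * K)\<^sup>2" by (rule power_mono[OF rKs(2,1)])
  also have "\<dots> = K\<^sup>2 * r\<^sup>2" by (simp add: power_mult_distrib)
  finally show "KK c * s + (r * KK c * s)\<^sup>2 \<le> poly (pp2 c) r"
    unfolding eval2 K_def[symmetric] using rKs(3) assms(1) pows by linarith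
qed

lemma factor_bounds:
  assumes a: "norm a = \<bar>w\<bar>" and r: "0 \<le> r" and small: "r * \<bar>w\<bar> \<le> c"
  defines "g \<equiv> (lam\<^sup>2 / (lam\<^sup>2 + r\<^sup>2 * w\<^sup>2)) powr q"
  shows "norm (char3 \<mu> (r *\<^sub>R a)) \<le> g"
    and "norm (dr (\<lambda>s. char3 \<mu> (s *\<^sub>R a)) r) \<le> (r * w\<^sup>2 * KK c) * g"
    and "norm (dr (dr (\<lambda>s. char3 \<mu> (s *\<^sub>R a))) r) \<le> (w\<^sup>2 * KK c) * g"
proof -
  have gam_pos: "0 < gam c" unfolding gam_def using lam_pos by simp
  have "(r * \<bar>w\<bar>)\<^sup>2 \<le> c\<^sup>2"
    by (rule power_mono[OF small]) (use r in simp)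
  then have "r\<^sup>2 * w\<^sup>2 \<le> c\<^sup>2" by (simp add: power_mult_distrib)
  then have gam_le: "gam c \<le> g"
    unfolding gam_def g_def using lam_pos q_nonneg
    by (intro powr_mono2 divide_left_mono) (auto intro!: mult_pos_pos add_pos_nonneg)
  have relative: "x * m2 \<le> (x * KK c) * g" if "0 \<le> x" for x
  proof -
    have "x * m2 = (x * KK c) * gam c" using gam_pos by (simp add: KK_def)
    also have "\<dots> \<le> (x * KK c) * g"
      using gam_le that KK_nonneg by (intro mult_left_mono) auto
    finally show ?thesis .
  qed
  have "(norm (r *\<^sub>R a))\<^sup>2 = r\<^sup>2 * w\<^sup>2" using a by (simp add: power_mult_distrib)
  then show "norm (char3 \<mu> (r *\<^sub>R a)) \<le> g"
    using char_decay_bound unfolding g_def by metis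
  show "norm (dr (\<lambda>s. char3 \<mu> (s *\<^sub>R a)) r) \<le> (r * w\<^sup>2 * KK c) * g"
    using dr_char3_ray_le_centered[of a r] relative[of "r * w\<^sup>2"] a r by simp
  show "norm (dr (dr (\<lambda>s. char3 \<mu> (s *\<^sub>R a))) r) \<le> (w\<^sup>2 * KK c) * g"
    using dr2_char3_ray_le[of a r] relative[of "w\<^sup>2"] a by simp
qed

lemma char3_prod_bounds_at:
  assumes J: "finite J" and a: "\<And>j. j \<in> J \<Longrightarrow> norm (a j) = \<bar>w j\<bar>"
    and unit: "(\<Sum>j\<in>J. (w j)\<^sup>2) \<le> 1" and \<rho>: "0 \<le> \<rho>" and small: "\<And>j. j \<in> J \<Longrightarrow> \<rho> * \<bar>w j\<bar> \<le> c"
  shows "bounds_at (\<lambda>r. \<Prod>j\<in>J. char3 \<mu> (r *\<^sub>R a j)) (PsiF w J) (pp1 c) (pp2 c) \<rho>"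
proof -
  define s where "s = (\<Sum>j\<in>J. (w j)\<^sup>2)"
  have s: "0 \<le> s" "s \<le> 1" using unit by (auto simp: s_def intro: sum_nonneg)
  have "norm (\<Prod>j\<in>J. char3 \<mu> (\<rho> *\<^sub>R a j)) \<le> PsiF w J \<rho> \<and>
      norm (dr (\<lambda>r. \<Prod>j\<in>J. char3 \<mu> (r *\<^sub>R a j)) \<rho>) \<le> (\<rho> * KK c * s) * PsiF w J \<rho> \<and>
      norm (dr (dr (\<lambda>r. \<Prod>j\<in>J. char3 \<mu> (r *\<^sub>R a j))) \<rho>)
        \<le> (KK c * s + (\<rho> * KK c * s)\<^sup>2) * PsiF w J \<rho>"
    using prod_derivative_bounds[OF J, of "\<lambda>j r. char3 \<mu> (r *\<^sub>R a j)"
        "\<lambda>j. (lam\<^sup>2 / (lam\<^sup>2 + \<rho>\<^sup>2 * (w j)\<^sup>2)) powr q" "\<lambda>j. \<rho> * (w j)\<^sup>2 * KK c" "\<lambda>j. (w j)\<^sup>2 * KK c" \<rho>]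
      factor_bounds[OF a \<rho> small] \<rho> KK_nonneg
    by (simp add: char3_ray(1) PsiF_def s_def sum_distrib_left sum_distrib_right algebra_simps)
  moreover have "0 \<le> PsiF w J \<rho>" by (simp add: PsiF_def prod_nonneg)
  ultimately show ?thesis
    using pp_dominate[OF \<rho> s, of c]
    by (intro bounds_atI twice_differentiable_char3_prod J)
       (auto intro: order_trans mult_right_mono)
qed

end

context char_decay
begin

lemma Nhat_Mhat_bounds:
  assumes B: "admissible_B B" and u: "u \<in> sphere 0 1"
    and unit: "(\<Sum>j=1..nu \<omega>. (pi_rv \<omega> j)\<^sup>2) \<le> 1" and \<rho>: "0 \<le> \<rho>"
    and small: "\<And>j. j \<in> {1..nu \<omega>} \<Longrightarrow> \<rho> * \<bar>pi_rv \<omega> j\<bar> \<le> c"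
  shows "bounds_at (\<lambda>r. Nhat \<mu> B \<omega> r u) (PsiF (pi_rv \<omega>) {1..nu \<omega>}) (pp1 c) (pp2 c) \<rho> \<and>
         bounds_at (\<lambda>r. Mhat \<mu> B \<omega> r u) (PsiF (pi_rv \<omega>) {1..nu \<omega>}) (pp1 c) (pp2 c) \<rho>"
proof -
  define J where "J = {1..nu \<omega>}"
  define dirs where "dirs \<theta> j = pi_rv \<omega> j *\<^sub>R (B u *v (O_star (tree_nu \<omega>) (phis \<omega>) \<theta> j *v e3))"
    for \<theta> j
  define N where "N \<theta> r = (\<Prod>j\<in>J. char3 \<mu> (r *\<^sub>R dirs \<theta> j))" for \<theta> r
  have norm_dirs: "norm (dirs \<theta> j) = \<bar>pi_rv \<omega> j\<bar>" for \<theta> j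
    using norm_rotated_e3[OF B u] by (simp add: dirs_def)
  have N_bounds: "bounds_at (N \<theta>) (PsiF (pi_rv \<omega>) J) (pp1 c) (pp2 c) \<rho>" for \<theta>
    unfolding N_def by (rule char3_prod_bounds_at) (use norm_dirs unit \<rho> small in \<open>auto simp: J_def\<close>)
  have Nhat_eq: "(\<lambda>r. Nhat \<mu> B \<omega> r u) = N (thetas \<omega>)"
    by (simp add: fun_eq_iff Nhat_def psi_rv_def N_def dirs_def J_def)
  have "bounds_at (\<lambda>r. Mhat \<mu> B \<omega> r u) (PsiF (pi_rv \<omega>) J) (pp1 c) (pp2 c) \<rho>"
  proof (cases "nu \<omega> = 1")
    case True
    then have "tree_nu \<omega> = Leaf" by (simp add: tree_nu_def)
    then have "(\<lambda>r. Mhat \<mu> B \<omega> r u) = (\<lambda>r. Nhat \<mu> B \<omega> r u)"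
      using True B u by (simp add: fun_eq_iff Mhat_def Nhat_def psi_rv_def pi_rv_def admissible_B_def)
    then show ?thesis using N_bounds Nhat_eq by simp
  next
    case False
    define M where "M = PiM {1..nu \<omega> - 1} (\<lambda>_. unif_theta)"
    have Mhat_eq: "(\<lambda>r. Mhat \<mu> B \<omega> r u) = (\<lambda>r. \<integral>\<theta>. N \<theta> r \<partial>M)"
      using False by (simp add: fun_eq_iff Mhat_def M_def N_def dirs_def J_def)
    have cont: "continuous_on UNIV (\<lambda>A::real^3^3. x *\<^sub>R (B u *v (A *v e3)))" for x
      unfolding matrix_vector_mult_def by (intro continuous_intros)
    have "(\<lambda>\<theta>. N \<theta> r) \<in> borel_measurable M" for r
      unfolding N_def dirs_def scaleR_scaleR M_def
      by (intro borel_measurable_prod measurable_compose[OF _ measurable_char3[OF _ sets_eq]]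
            measurable_compose[OF measurable_O_star[OF measurable_theta_coordinate]
              borel_measurable_continuous_onI[OF cont]])
         (simp add: prob prob_space_imp_sigma_finite)
    moreover have "norm (N \<theta> r) \<le> 1 \<and>
        norm (dr (N \<theta>) r) \<le> (\<Sum>j\<in>J. \<bar>pi_rv \<omega> j\<bar> * m1) \<and>
        norm (dr (dr (N \<theta>)) r) \<le> (\<Sum>j\<in>J. (pi_rv \<omega> j)\<^sup>2 * m2) + (\<Sum>j\<in>J. \<bar>pi_rv \<omega> j\<bar> * m1)\<^sup>2"
      for \<theta> r
      using char3_prod_uniform_bounds[of J r "dirs \<theta>"] by (simp add: N_def[abs_def] norm_dirs J_def)
    ultimately have "bounds_at (\<lambda>r. \<integral>\<theta>. N \<theta> r \<partial>M) (PsiF (pi_rv \<omega>) J) (pp1 c) (pp2 c) \<rho>"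
      by (intro bounds_at_integral N_bounds)
         (auto simp: M_def N_def[abs_def] J_def prob_space_PiM prob_space_unif_theta
           twice_differentiable_char3_prod)
    then show ?thesis unfolding Mhat_eq .
  qed
  then show ?thesis using N_bounds Nhat_eq by (simp add: J_def)
qed

lemma Psi_eq_PsiF: "Psi lam q \<omega> = PsiF (pi_rv \<omega>) {1..nu \<omega>}"
  by (simp add: fun_eq_iff Psi_def PsiF_def)

lemma bounds_on_random_interval:
  assumes B: "admissible_B B" and sites: "valid_sites (Kseq \<omega>)"
  shows "\<forall>\<rho>\<in>{0..R_rv \<mu> \<omega>}. \<forall>u\<in>sphere 0 1.
    bounds_at (\<lambda>r. Nhat \<mu> B \<omega> r u) (Psi lam q \<omega>)
      (pp1 (moment4 \<mu> powr (-1/4) / 2)) (pp2 (moment4 \<mu> powr (-1/4) / 2)) \<rho> \<and>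
    bounds_at (\<lambda>r. Mhat \<mu> B \<omega> r u) (Psi lam q \<omega>)
      (pp1 (moment4 \<mu> powr (-1/4) / 2)) (pp2 (moment4 \<mu> powr (-1/4) / 2)) \<rho>"
proof (intro ballI)
  fix \<rho> and u :: "real^3"
  assume \<rho>: "\<rho> \<in> {0..R_rv \<mu> \<omega>}" and u: "u \<in> sphere 0 1"
  have "0 \<le> moment4 \<mu>" by (simp add: moment4_def)
  then show "bounds_at (\<lambda>r. Nhat \<mu> B \<omega> r u) (Psi lam q \<omega>)
      (pp1 (moment4 \<mu> powr (-1/4) / 2)) (pp2 (moment4 \<mu> powr (-1/4) / 2)) \<rho> \<and>
    bounds_at (\<lambda>r. Mhat \<mu> B \<omega> r u) (Psi lam q \<omega>)
      (pp1 (moment4 \<mu> powr (-1/4) / 2)) (pp2 (moment4 \<mu> powr (-1/4) / 2)) \<rho>"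
    unfolding Psi_eq_PsiF using \<rho>
    by (intro Nhat_Mhat_bounds[OF B u sum_pi_rv_sq_le_1[OF sites]] rho_pi_rv_bound) auto
qed

end

theorem proposition2p5:
  fixes \<mu>0 :: "(real^3) measure" and p lam :: real and \<sigma> :: "3 \<Rightarrow> real"
  assumes prob: "prob_space \<mu>0" and sets: "sets \<mu>0 = sets borel"
    and m4: "integrable \<mu>0 (\<lambda>v. norm v ^ 4)"
    and p_pos: "p > 0"
    and decay: "(\<lambda>\<xi>. norm (char3 \<mu>0 \<xi>)) \<in> o[at_infinity](\<lambda>\<xi>. norm \<xi> powr (- p))"
    and mean: "\<forall>i. integral\<^sup>L \<mu>0 (\<lambda>v. v $ i) = 0"
    and cov: "\<forall>i j. integral\<^sup>L \<mu>0 (\<lambda>v. v $ i * v $ j) = (if i = j then (\<sigma> i)\<^sup>2 else 0)"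
    and sig: "(\<sigma> 1)\<^sup>2 + (\<sigma> 2)\<^sup>2 + (\<sigma> 3)\<^sup>2 = 3"
    and lam_pos: "lam > 0"
    and lam_bd: "\<forall>\<xi>. norm (char3 \<mu>0 \<xi>) \<le>
                   (lam\<^sup>2 / (lam\<^sup>2 + (norm \<xi>)\<^sup>2)) powr (1 / (2 * real_of_int \<lceil>2 / p\<rceil>))"
  shows "\<exists>p1 p2 :: real poly.
     degree p1 = 2 \<and> degree p2 = 4 \<and> (\<forall>i\<le>2. coeff p1 i > 0) \<and> (\<forall>i\<le>4. coeff p2 i > 0) \<and>
     (\<forall>b t B. kernel_b b \<longrightarrow> t \<ge> 0 \<longrightarrow> admissible_B B \<longrightarrow>
        (AE \<omega> in Pt b t. \<forall>\<rho>\<in>{0..R_rv \<mu>0 \<omega>}. \<forall>u\<in>sphere 0 1.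
           bounds_at (\<lambda>r. Nhat \<mu>0 B \<omega> r u)
             (Psi lam (1 / (2 * real_of_int \<lceil>2 / p\<rceil>)) \<omega>) p1 p2 \<rho> \<and>
           bounds_at (\<lambda>r. Mhat \<mu>0 B \<omega> r u)
             (Psi lam (1 / (2 * real_of_int \<lceil>2 / p\<rceil>)) \<omega>) p1 p2 \<rho>))"
proof -
  define q where "q = 1 / (2 * real_of_int \<lceil>2 / p\<rceil>)"
  define c where "c = moment4 \<mu>0 powr (-1/4) / 2"
  have "0 < 2 / p" using p_pos by simp
  then have "0 < real_of_int \<lceil>2 / p\<rceil>" using le_of_int_ceiling[of "2 / p"] by linarith
  then have q: "0 \<le> q"
    unfolding q_def using divide_nonneg_pos[of 1 "2 * real_of_int \<lceil>2 / p\<rceil>"] by linarith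
  have second_moment: "integrable \<mu>0 (\<lambda>v. (norm v)\<^sup>2)"
    by (rule integrable_square_norm[OF prob_space.finite_measure[OF prob] sets m4])
  interpret char_decay \<mu>0 lam q
    by (intro char_decay.intro centered_measure.intro char_decay_axioms.intro
          prob sets second_moment mean lam_pos q) (use lam_bd in \<open>simp add: q_def\<close>)
  have "AE \<omega> in Pt b t. \<forall>\<rho>\<in>{0..R_rv \<mu>0 \<omega>}. \<forall>u\<in>sphere 0 1.
      bounds_at (\<lambda>r. Nhat \<mu>0 B \<omega> r u) (Psi lam q \<omega>) (pp1 c) (pp2 c) \<rho> \<and>
      bounds_at (\<lambda>r. Mhat \<mu>0 B \<omega> r u) (Psi lam q \<omega>) (pp1 c) (pp2 c) \<rho>"
    if "kernel_b b" and "admissible_B B" for b t B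
    using AE_valid_sites_Pt[OF that(1)]
    by eventually_elim (rule bounds_on_random_interval[OF that(2), folded c_def])
  then show ?thesis
    unfolding q_def[symmetric] using pp_shape by blast
qed

end
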